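(* Let $p_0>2$ be rational with continued fraction expansion $p_0=\nu_1+\cfrac{1}{\nu_2+\cfrac{1}{\ddots+\cfrac{1}{\nu_\alpha}}}$, $\alpha\ge1$, $\nu_j\in\mathbb{Z}_{\ge1}$. Define: $m_j=\nu_1+\dots+\nu_j$ for $0\le j\le\alpha$ (so $m_0=0$); $p_1=1$, $p_j=p_{j-2}-\nu_{j-1}p_{j-1}$ for $2\le j\le\alpha+1$ (with $p_0$ the given number); $y_{-1}=0,y_0=1,z_{-1}=1,z_0=0$, $y_j=y_{j-2}+\nu_jy_{j-1}$, $z_j=z_{j-2}+\nu_jz_{j-1}$ for $1\le j\le\alpha$; for $0\le r\le\alpha-1$ and $m_r<j\le m_{r+1}$: $\widetilde n_j=y_{r-1}+(j-m_r)y_r$; for $0\le r\le\alpha-1$ and $m_r\le j<m_{r+1}$: $w_j=z_{r-1}+(j-m_r)z_r-1$. Let $\theta=\pi/p_0$, $N$ an even positive integer, $u\in\mathbb{C}$, $m\in\{0,\dots,N/2\}$, and $\omega_1,\dots,\omega_m$ a solution of $$-\Biggl(\frac{\sinh\frac{\theta}{2}(\omega_j+i(u+2))\sinh\frac{\theta}{2}(\omega_j-iu)}{\sinh\frac{\theta}{2}(\omega_j-i(u+2))\sinh\frac{\theta}{2}(\omega_j+iu)}\Biggr)^{N/2}=\frac{Q(\omega_j+2i)}{Q(\omega_j-2i)},\quad Q(v)=\prod_{k=1}^m\sinh\tfrac{\theta}{2}(v-\omega_k).$$ For $n\ge0$ let $T_{n-1}(v)=\sum_{j=1}^{n}\phi(v-i(u+n+2-2j))\phi(v+i(u-n+2j))\frac{Q(v+in)Q(v-in)}{Q(v+i(2j-n))Q(v+i(2j-n-2))}$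 with $\phi(v)=(\sinh\frac{\theta}{2}v/\sin\theta)^{N/2}$. For $1\le j\le m_\alpha-1$, with $r\in\{0,\dots,\alpha-1\}$ the unique integer such that $m_r\le j<m_{r+1}$, set $$Y_j(v)=\frac{T_{\widetilde n_{j+1}+y_r-1}(v+iw_jp_0)\,T_{\widetilde n_{j+1}-y_r-1}(v+iw_jp_0)}{T_{y_r-1}(v+i\widetilde n_{j+1}+iw_jp_0)\,T_{y_r-1}(v-i\widetilde n_{j+1}+iw_jp_0)},$$ and with $j_{\max}=m_\alpha-1$ set $$K(v)=\frac{(-1)^{mz_\alpha}T_{\widetilde n_{j_{\max}}-1}(v+iw_{j_{\max}}p_0)}{T_{y_{\alpha-1}-1}(v+iy_\alpha+iw_{j_{\max}}p_0)};$$ also set $Y_0(v)=0$ and $Y_{-1}(v)=\infty$ (so that $(1+Y_{-1})^{-1}=0$). Then the following hold as identities of meromorphic functions of $v$: (i) for $1\le r\le\alpha$ and $m_{r-1}\le j\le m_r-2$: $Y_j(v+ip_r)Y_j(v-ip_r)=\bigl(1+Y_{j-1}(v)\bigr)^{1-2\delta_{j,m_{r-1}}}\bigl(1+Y_{j+1}(v)\bigr)$; (ii) for $1\le r\le\alpha-1$ and $j=m_r-1$: $Y_j(v+ip_r+ip_{r+1})Y_j(v+ip_r-ip_{r+1})Y_j(v-ip_r+ip_{r+1})Y_j(v-ip_r-ip_{r+1})=\bigl\{(1+Y_{j-1}(v+ip_{r+1}))(1+Y_{j-1}(v-ip_{r+1}))\bigr\}^{1-2\delta_{1,\nu_r}}(1+Y_{j+1}(v+ip_r))(1+Y_{j+1}(v-ip_r))(1+Y_j(v+ip_r-ip_{r+1}))(1+Y_j(v-ip_r+ip_{r+1}))$;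 (iii) $1+Y_{m_\alpha-1}(v)=\bigl(1+K(v)\bigr)^2$; (iv) $K(v+ip_\alpha)K(v-ip_\alpha)=1+Y_{m_\alpha-2}(v)$.
   Context: $T_{n-1}(v)$ are the eigenvalues (dressed vacuum form) of the fusion hierarchy of quantum transfer matrices for the spin-$\frac12$ XXZ chain with $\Delta=\cos(\pi/p_0)$; $\sinh$ denotes hyperbolic sine; $\delta$ is the Kronecker delta. The $\widetilde n_j$ are a rearrangement of the Takahashi–Suzuki numbers. *)

theory Defs
  imports "HOL-Analysis.Analysis"
begin

(* nu :: nat => nat encodes nu_1,...,nu_alpha (values outside 1..alpha irrelevant) *)

fun cfrec :: "(nat \<Rightarrow> nat) \<Rightarrow> nat \<Rightarrow> nat \<Rightarrow> real" where
  "cfrec \<nu> 0 j = real (\<nu> j)"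
| "cfrec \<nu> (Suc k) j = real (\<nu> j) + 1 / cfrec \<nu> k (Suc j)"

definition cfval :: "(nat \<Rightarrow> nat) \<Rightarrow> nat \<Rightarrow> real" where
  "cfval \<nu> \<alpha> = cfrec \<nu> (\<alpha> - 1) 1"

definition msum :: "(nat \<Rightarrow> nat) \<Rightarrow> nat \<Rightarrow> int" where
  "msum \<nu> j = int (\<Sum>k = 1..j. \<nu> k)"

fun pseq :: "(nat \<Rightarrow> nat) \<Rightarrow> real \<Rightarrow> nat \<Rightarrow> real" where
  "pseq \<nu> p0 0 = p0"
| "pseq \<nu> p0 (Suc 0) = 1"
| "pseq \<nu> p0 (Suc (Suc j)) = pseq \<nu> p0 j - real (\<nu> (Suc j)) * pseq \<nu> p0 (Suc j)"

(* shifted sequences: yy nu k = y_{k-1}, zz nu k = z_{k-1} *)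
fun yy :: "(nat \<Rightarrow> nat) \<Rightarrow> nat \<Rightarrow> int" where
  "yy \<nu> 0 = 0"
| "yy \<nu> (Suc 0) = 1"
| "yy \<nu> (Suc (Suc k)) = yy \<nu> k + int (\<nu> (Suc k)) * yy \<nu> (Suc k)"

fun zz :: "(nat \<Rightarrow> nat) \<Rightarrow> nat \<Rightarrow> int" where
  "zz \<nu> 0 = 1"
| "zz \<nu> (Suc 0) = 0"
| "zz \<nu> (Suc (Suc k)) = zz \<nu> k + int (\<nu> (Suc k)) * zz \<nu> (Suc k)"

definition ycf :: "(nat \<Rightarrow> nat) \<Rightarrow> int \<Rightarrow> int" where
  "ycf \<nu> j = yy \<nu> (nat (j + 1))"

definition zcf :: "(nat \<Rightarrow> nat) \<Rightarrow> int \<Rightarrow> int" where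
  "zcf \<nu> j = zz \<nu> (nat (j + 1))"

definition rnt :: "(nat \<Rightarrow> nat) \<Rightarrow> nat \<Rightarrow> int \<Rightarrow> nat" where
  "rnt \<nu> \<alpha> j = (THE r. r < \<alpha> \<and> msum \<nu> r < j \<and> j \<le> msum \<nu> (Suc r))"

definition rw :: "(nat \<Rightarrow> nat) \<Rightarrow> nat \<Rightarrow> int \<Rightarrow> nat" where
  "rw \<nu> \<alpha> j = (THE r. r < \<alpha> \<and> msum \<nu> r \<le> j \<and> j < msum \<nu> (Suc r))"

definition ntil :: "(nat \<Rightarrow> nat) \<Rightarrow> nat \<Rightarrow> int \<Rightarrow> int" where
  "ntil \<nu> \<alpha> j = (let r = rnt \<nu> \<alpha> j in
      ycf \<nu> (int r - 1) + (j - msum \<nu> r) * ycf \<nu> (int r))"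

definition wcf :: "(nat \<Rightarrow> nat) \<Rightarrow> nat \<Rightarrow> int \<Rightarrow> int" where
  "wcf \<nu> \<alpha> j = (let r = rw \<nu> \<alpha> j in
      zcf \<nu> (int r - 1) + (j - msum \<nu> r) * zcf \<nu> (int r) - 1)"

definition Qf :: "real \<Rightarrow> nat \<Rightarrow> (nat \<Rightarrow> complex) \<Rightarrow> complex \<Rightarrow> complex" where
  "Qf \<theta> m \<omega> v = (\<Prod>k = 1..m. sinh (complex_of_real (\<theta> / 2) * (v - \<omega> k)))"

definition phif :: "real \<Rightarrow> nat \<Rightarrow> complex \<Rightarrow> complex" where
  "phif \<theta> N v = (sinh (complex_of_real (\<theta> / 2) * v) / complex_of_real (sin \<theta>)) ^ (N div 2)"

(* Tf ... n v = T_{n-1}(v) *)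
definition Tf :: "real \<Rightarrow> nat \<Rightarrow> nat \<Rightarrow> complex \<Rightarrow> (nat \<Rightarrow> complex) \<Rightarrow> nat \<Rightarrow> complex \<Rightarrow> complex" where
  "Tf \<theta> N m u \<omega> n v =
     (\<Sum>j = 1..n.
        phif \<theta> N (v - \<i> * (u + of_nat n + 2 - 2 * of_nat j))
      * phif \<theta> N (v + \<i> * (u - of_nat n + 2 * of_nat j))
      * (Qf \<theta> m \<omega> (v + \<i> * of_nat n) * Qf \<theta> m \<omega> (v - \<i> * of_nat n))
      / (Qf \<theta> m \<omega> (v + \<i> * (2 * of_nat j - of_nat n))
         * Qf \<theta> m \<omega> (v + \<i> * (2 * of_nat j - of_nat n - 2))))"

definition Yf :: "(nat \<Rightarrow> nat) \<Rightarrow> nat \<Rightarrow> real \<Rightarrow> nat \<Rightarrow> nat \<Rightarrow> complex \<Rightarrow> (nat \<Rightarrow> complex)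
                  \<Rightarrow> int \<Rightarrow> complex \<Rightarrow> complex" where
  "Yf \<nu> \<alpha> p0 N m u \<omega> j v =
     (if j = 0 then 0 else
      (let \<theta> = pi / p0; r = rw \<nu> \<alpha> j; nt = ntil \<nu> \<alpha> (j + 1); yr = ycf \<nu> (int r);
           s = \<i> * of_int (wcf \<nu> \<alpha> j) * complex_of_real p0;
           T = Tf \<theta> N m u \<omega>
       in T (nat (nt + yr - 1 + 1)) (v + s) * T (nat (nt - yr - 1 + 1)) (v + s)
          / (T (nat (yr - 1 + 1)) (v + \<i> * of_int nt + s)
             * T (nat (yr - 1 + 1)) (v - \<i> * of_int nt + s))))"

definition Kf :: "(nat \<Rightarrow> nat) \<Rightarrow> nat \<Rightarrow> real \<Rightarrow> nat \<Rightarrow> nat \<Rightarrow> complex \<Rightarrow> (nat \<Rightarrow> complex)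
                  \<Rightarrow> complex \<Rightarrow> complex" where
  "Kf \<nu> \<alpha> p0 N m u \<omega> v =
     (let \<theta> = pi / p0; jmax = msum \<nu> \<alpha> - 1;
          s = \<i> * of_int (wcf \<nu> \<alpha> jmax) * complex_of_real p0;
          T = Tf \<theta> N m u \<omega>
      in (-1) ^ (m * nat (zcf \<nu> (int \<alpha>))) * T (nat (ntil \<nu> \<alpha> jmax - 1 + 1)) (v + s)
         / T (nat (ycf \<nu> (int \<alpha> - 1) - 1 + 1)) (v + \<i> * of_int (ycf \<nu> (int \<alpha>)) + s))"

(* (1 + Y_j(v))^e, with the convention Y_{-1} = infinity, i.e. (1 + Y_{-1})^{-1} = 0 *)
definition onepY :: "(nat \<Rightarrow> nat) \<Rightarrow> nat \<Rightarrow> real \<Rightarrow> nat \<Rightarrow> nat \<Rightarrow> complex \<Rightarrow> (nat \<Rightarrow> complex)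
                  \<Rightarrow> int \<Rightarrow> int \<Rightarrow> complex \<Rightarrow> complex" where
  "onepY \<nu> \<alpha> p0 N m u \<omega> j e v =
     (if j = -1 then 0 else (1 + Yf \<nu> \<alpha> p0 N m u \<omega> j v) powi e)"

end

(* With G = phi phi / (Q Q) and S a primitive of G along the lattice x + 2iZ, the transfer
   matrices are segment functions: T_{n-1}(x + ic) = Q(x + i(c+n)) Q(x + i(c-n)) (S(c+n) - S(c-n)).
   The three-term Pluecker identity for segment functions is the T-system; each Y_j is a cross
   ratio of four of them and 1 + Y_j the complementary cross ratio, so every relation of the
   Y-system becomes a cancellation of segment factors, once the shifts by i p_r = +-i(z p0 - y)
   are moved back to a common base point using the 2i p0-periodicity of the T's.  Cancelling is
   legitimate because the relevant T's are meromorphic and not identically zero: if T_{k-1}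
   vanished, G would have period 2ik, which the Bethe equations exclude as long as
   sin(2 pi k / p0) is nonzero; for k = y_r with r < alpha this holds since 2 y_r < y_alpha and
   p0 = y_alpha / z_alpha in lowest terms. *)

theory Submission
  imports Defs "HOL-Complex_Analysis.Complex_Analysis"
begin

lemma sinh_add_i_pi: "sinh (z + \<i> * of_real pi) = - sinh (z::complex)"
proof -
  have "exp (z + \<i> * of_real pi) = - exp z" by (simp add: exp_add)
  moreover have "exp (-(z + \<i> * of_real pi)) = - exp (-z)"
    using exp_add[of "-z" "-(\<i> * of_real pi)"] by (simp add: exp_minus)
  ultimately show ?thesis unfolding sinh_field_def by (simp add: field_simps)
qed

lemma sinh_i_mult_of_real: "sinh (\<i> * complex_of_real t) = \<i> * of_real (sin t)"
proof -
  have "sinh (\<i> * complex_of_real t) = -\<i> * sin (\<i> * (\<i> * complex_of_real t))" by (rule sinh_conv_sin)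
  also have "\<i> * (\<i> * complex_of_real t) = - of_real t" by (simp add: mult.assoc[symmetric])
  finally show ?thesis by (simp add: sin_of_real)
qed

lemma periodic_add_of_int_mult:
  fixes f :: "'a::ring_1 \<Rightarrow> 'b"
  assumes "\<And>x. f (x + p) = f x"
  shows "f (x + of_int t * p) = f x"
proof (induction t arbitrary: x rule: int_induct[where k=0])
  case (step1 i)
  have "f (x + of_int (i + 1) * p) = f ((x + of_int i * p) + p)"
    by (simp add: algebra_simps)
  then show ?case using assms step1 by simp
next
  case (step2 i)
  have "f (x + of_int i * p) = f ((x + of_int (i - 1) * p) + p)"
    by (simp add: algebra_simps)
  then show ?case using assms step2 by simp
qed simp

lemma eventually_cosparse_UNIV_translate:
  assumes "\<forall>\<^sub>\<approx>x. P (x::complex)"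
  shows "\<forall>\<^sub>\<approx>x. P (x + c)"
proof -
  have "(+) (-c) ` {x. \<not> P x} sparse_in UNIV"
    using assms by (intro sparse_in_translate_UNIV) (simp add: eventually_cosparse)
  moreover have "(+) (-c) ` {x. \<not> P x} = {x. \<not> P (x + c)}"
    by (auto simp: image_iff intro!: exI[where x="_ + c"])
  ultimately show ?thesis by (simp add: eventually_cosparse)
qed

lemma entire_eq_if_eventually_eq:
  assumes "f analytic_on UNIV" "g analytic_on UNIV" "\<forall>\<^sub>\<approx>x. f x = (g x :: complex)"
  shows "f x = g x"
proof -
  have "(\<lambda>x. f x - g x) nicely_meromorphic_on UNIV"
    using assms by (intro analytic_on_imp_nicely_meromorphic_on analytic_intros)
  from nicely_meromorphic_imp_constant_or_avoid[OF this, of 0] show ?thesis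
  proof
    assume "\<forall>\<^sub>\<approx>x\<in>UNIV. f x - g x \<noteq> 0"
    with assms(3) have "\<forall>\<^sub>\<approx>x::complex. False" by eventually_elim auto
    then show ?thesis by (simp add: eventually_False)
  qed auto
qed

lemma entire_eventually_ne_0:
  assumes "f analytic_on UNIV" "f x0 \<noteq> (0::complex)"
  shows "\<forall>\<^sub>\<approx>x. f x \<noteq> 0"
  using nicely_meromorphic_imp_constant_or_avoid[OF analytic_on_imp_nicely_meromorphic_on[OF assms(1)], of 0]
    assms(2) by auto

lemma analytic_on_Qf [analytic_intros]:
  "f analytic_on A \<Longrightarrow> (\<lambda>x. Qf \<theta> m \<omega> (f x)) analytic_on A"
  unfolding Qf_def by (intro analytic_intros)

lemma analytic_on_phif [analytic_intros]:
  "sin \<theta> \<noteq> 0 \<Longrightarrow> f analytic_on A \<Longrightarrow> (\<lambda>x. phif \<theta> N (f x)) analytic_on A"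
  unfolding phif_def by (intro analytic_intros) auto

lemma Tf_meromorphic: "Tf \<theta> N m u \<omega> n meromorphic_on A"
  unfolding Tf_def phif_def Qf_def
  by (intro meromorphic_intros analytic_on_imp_meromorphic_on analytic_intros)

section \<open>Continued fractions\<close>

lemma msum_Suc: "msum \<nu> (Suc r) = msum \<nu> r + int (\<nu> (Suc r))"
  unfolding msum_def by simp

lemma msum_nonneg: "0 \<le> msum \<nu> r"
  unfolding msum_def by (rule of_nat_0_le_iff)

lemma pseq_eq: "pseq \<nu> p0 r = (-1)^r * (real_of_int (zz \<nu> r) * p0 - real_of_int (yy \<nu> r))"
proof (induction \<nu> p0 r rule: pseq.induct)
  case (3 \<nu> p0 j)
  have "pseq \<nu> p0 (Suc (Suc j)) = pseq \<nu> p0 j - real (\<nu> (Suc j)) * pseq \<nu> p0 (Suc j)" by simp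
  then show ?case unfolding "3.IH" by (simp add: algebra_simps)
qed simp_all

lemma yy_zz_det: "yy \<nu> (Suc r) * zz \<nu> r - yy \<nu> r * zz \<nu> (Suc r) = (-1)^r"
  by (induction r) (simp_all add: algebra_simps)

lemma yy_nonneg: "0 \<le> yy \<nu> r"
  by (induction \<nu> r rule: yy.induct) auto

lemma zz_nonneg: "0 \<le> zz \<nu> r"
  by (induction \<nu> r rule: zz.induct) auto

lemma cfrec_ge_1: "(\<forall>i\<in>{j..j+k}. \<nu> i \<ge> 1) \<Longrightarrow> cfrec \<nu> k j \<ge> 1"
proof (induction k arbitrary: j)
  case (Suc k)
  then have "cfrec \<nu> k (Suc j) \<ge> 1" by auto
  then have "0 \<le> 1 / cfrec \<nu> k (Suc j)" by simp
  moreover have "1 \<le> real (\<nu> j)" using Suc.prems by auto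
  ultimately show ?case by (simp only: cfrec.simps)
qed simp

locale continued_fraction =
  fixes \<nu> :: "nat \<Rightarrow> nat" and \<alpha> :: nat
  assumes alpha: "\<alpha> \<ge> 1" and nu_pos: "\<forall>j\<in>{1..\<alpha>}. \<nu> j \<ge> 1" and nu_last: "\<nu> \<alpha> \<ge> 2"
begin

abbreviation "M \<equiv> msum \<nu>"

text \<open>Note the index shift: \<open>y r\<close> and \<open>z r\<close> are the paper's \<open>y\<^sub>r\<^sub>-\<^sub>1\<close> and \<open>z\<^sub>r\<^sub>-\<^sub>1\<close>.\<close>

abbreviation "y \<equiv> yy \<nu>"
abbreviation "z \<equiv> zz \<nu>"

lemma msum_strict_mono: "r < r' \<Longrightarrow> r' \<le> \<alpha> \<Longrightarrow> M r < M r'"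
proof (induction r')
  case (Suc r')
  have "\<nu> (Suc r') \<ge> 1" using Suc.prems nu_pos by auto
  then have "M r' < M (Suc r')" unfolding msum_Suc by simp
  with Suc show ?case by (cases "r = r'") auto
qed simp

lemma msum_mono: "r \<le> r' \<Longrightarrow> r' \<le> \<alpha> \<Longrightarrow> M r \<le> M r'"
  using msum_strict_mono by (cases "r = r'") (auto intro: less_imp_le)

lemma msum_blocks_disjoint:
  assumes "r < \<alpha>" "r' < \<alpha>" "M r < M (Suc r')" "M r' < M (Suc r)"
  shows "r = r'"
proof (rule ccontr)
  assume "r \<noteq> r'"
  then consider "Suc r \<le> r'" | "Suc r' \<le> r" by linarith
  then show False
    by cases (use assms msum_mono[of "Suc r" r'] msum_mono[of "Suc r'" r] in auto)
qed

lemma rw_eq: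
  assumes "q < \<alpha>" "M q \<le> j" "j < M (Suc q)"
  shows "rw \<nu> \<alpha> j = q"
  unfolding rw_def
  by (rule the_equality) (use assms msum_blocks_disjoint in fastforce)+

lemma rnt_eq:
  assumes "q < \<alpha>" "M q < j" "j \<le> M (Suc q)"
  shows "rnt \<nu> \<alpha> j = q"
  unfolding rnt_def
  by (rule the_equality) (use assms msum_blocks_disjoint in fastforce)+

lemma ycf_of_nat: "ycf \<nu> (int r) = y (Suc r)" "ycf \<nu> (int r - 1) = y r"
  unfolding ycf_def by (simp_all add: nat_add_distrib)

lemma zcf_of_nat: "zcf \<nu> (int r) = z (Suc r)" "zcf \<nu> (int r - 1) = z r"
  unfolding zcf_def by (simp_all add: nat_add_distrib)

lemma ntil_eq:
  assumes "q < \<alpha>" "M q < j" "j \<le> M (Suc q)"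
  shows "ntil \<nu> \<alpha> j = y q + (j - M q) * y (Suc q)"
  unfolding ntil_def Let_def rnt_eq[OF assms] ycf_of_nat ..

lemma wcf_eq:
  assumes "q < \<alpha>" "M q \<le> j" "j < M (Suc q)"
  shows "wcf \<nu> \<alpha> j = z q + (j - M q) * z (Suc q) - 1"
  unfolding wcf_def Let_def rw_eq[OF assms] zcf_of_nat ..

lemma yy_Suc_le: "r \<le> \<alpha> \<Longrightarrow> y r \<le> y (Suc r)"
proof (cases r)
  case (Suc r')
  assume "r \<le> \<alpha>"
  then have "\<nu> (Suc r') \<ge> 1" using nu_pos Suc by auto
  then have "y (Suc r') \<le> int (\<nu> (Suc r')) * y (Suc r')"
    using yy_nonneg[of \<nu> "Suc r'"] by (simp add: mult_le_cancel_right1)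
  then show ?thesis using Suc yy_nonneg[of \<nu> r'] by simp
qed simp

lemma yy_mono: "r \<le> r' \<Longrightarrow> r' \<le> Suc \<alpha> \<Longrightarrow> y r \<le> y r'"
proof (induction r')
  case (Suc r')
  then show ?case
    using yy_Suc_le[of r'] by (cases "r = Suc r'") auto
qed simp

lemma yy_pos: "1 \<le> r \<Longrightarrow> r \<le> Suc \<alpha> \<Longrightarrow> 1 \<le> y r"
  using yy_mono[of 1 r] by simp

end

lemma coprime_yy_zz: "coprime (yy \<nu> (Suc r)) (zz \<nu> (Suc r))"
proof (rule coprimeI)
  fix c assume "c dvd yy \<nu> (Suc r)" "c dvd zz \<nu> (Suc r)"
  then have "c dvd yy \<nu> (Suc r) * zz \<nu> r - yy \<nu> r * zz \<nu> (Suc r)" by simp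
  then show "is_unit c" unfolding yy_zz_det by (rule dvd_unit_imp_unit) simp
qed

locale cf_value = continued_fraction +
  fixes p0 :: real
  assumes cf: "p0 = cfval \<nu> \<alpha>" and p0_gt: "p0 > 2"
begin

definition cf_tail :: "nat \<Rightarrow> real" where
  "cf_tail r = cfrec \<nu> (\<alpha> - Suc r) (Suc r)"

lemma cf_tail_ge_1: "r < \<alpha> \<Longrightarrow> cf_tail r \<ge> 1"
  unfolding cf_tail_def using nu_pos by (intro cfrec_ge_1) auto

lemma cf_tail_Suc: "Suc r < \<alpha> \<Longrightarrow> cf_tail r = real (\<nu> (Suc r)) + 1 / cf_tail (Suc r)"
proof -
  assume "Suc r < \<alpha>"
  then have "\<alpha> - Suc r = Suc (\<alpha> - Suc (Suc r))" by simp
  then show ?thesis unfolding cf_tail_def by simp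
qed

lemma p0_convergent: "r < \<alpha> \<Longrightarrow> p0 * (cf_tail r * z (Suc r) + z r) = cf_tail r * y (Suc r) + y r"
proof (induction r)
  case 0
  have "cf_tail 0 = p0" unfolding cf_tail_def cf cfval_def by simp
  then show ?case by simp
next
  case (Suc r)
  define t where "t = cf_tail (Suc r)"
  have t1: "t \<ge> 1" unfolding t_def using Suc.prems by (intro cf_tail_ge_1)
  have tt: "t * cf_tail r = t * real (\<nu> (Suc r)) + 1"
    unfolding cf_tail_Suc[OF Suc.prems] t_def[symmetric] using t1 by (simp add: field_simps)
  have "t * (p0 * (cf_tail r * z (Suc r) + z r)) = t * (cf_tail r * y (Suc r) + y r)"
    using Suc by simp
  then have "p0 * ((t * cf_tail r) * z (Suc r) + t * z r) = (t * cf_tail r) * y (Suc r) + t * y r"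
    by (simp add: algebra_simps)
  then show ?case unfolding tt t_def[symmetric] by (simp add: algebra_simps)
qed

lemma p0_mult_zz_last: "p0 * real_of_int (z (Suc \<alpha>)) = real_of_int (y (Suc \<alpha>))"
proof -
  obtain q where q: "\<alpha> = Suc q" using alpha by (cases \<alpha>) auto
  have "cf_tail q = real (\<nu> \<alpha>)" unfolding cf_tail_def using q by simp
  moreover have "y (Suc \<alpha>) = y q + int (\<nu> \<alpha>) * y \<alpha>" "z (Suc \<alpha>) = z q + int (\<nu> \<alpha>) * z \<alpha>"
    using q by simp_all
  ultimately show ?thesis using p0_convergent[of q] q by (simp add: algebra_simps)
qed

lemma yy_last_gt_twice: "1 \<le> r \<Longrightarrow> r \<le> \<alpha> \<Longrightarrow> 2 * y r < y (Suc \<alpha>)"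
proof -
  assume r: "1 \<le> r" "r \<le> \<alpha>"
  obtain q where q: "\<alpha> = Suc q" using alpha by (cases \<alpha>) auto
  have rec: "y (Suc \<alpha>) = y q + int (\<nu> \<alpha>) * y \<alpha>" unfolding q by simp
  have "y r \<le> y \<alpha>" "1 \<le> y \<alpha>" using r by (auto intro: yy_mono yy_pos)
  show ?thesis
  proof (cases "q = 0")
    case True
    then have "p0 = real (\<nu> 1)" unfolding cf cfval_def q by simp
    then have "\<nu> 1 \<ge> 3" using p0_gt by simp
    then show ?thesis using True q r rec by simp
  next
    case False
    then have "1 \<le> y q" using q by (intro yy_pos) auto
    moreover have "2 * y \<alpha> \<le> int (\<nu> \<alpha>) * y \<alpha>"
      using nu_last \<open>1 \<le> y \<alpha>\<close> by (intro mult_right_mono) auto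
    ultimately show ?thesis using rec \<open>y r \<le> y \<alpha>\<close> by linarith
  qed
qed

text \<open>\<open>p0 = y (Suc \<alpha>) / z (Suc \<alpha>)\<close> in lowest terms, so \<open>2k / p0\<close> is not an integer.\<close>

lemma sin_two_pi_div_p0_ne_0:
  assumes "0 < k" "2 * k < y (Suc \<alpha>)"
  shows "sin (2 * (pi / p0) * real_of_int k) \<noteq> 0"
proof
  assume "sin (2 * (pi / p0) * real_of_int k) = 0"
  then obtain i :: int where i: "2 * (pi / p0) * real_of_int k = of_int i * pi"
    unfolding sin_zero_iff_int2 by blast
  have "2 * pi * real_of_int k = real_of_int i * pi * p0"
    using i p0_gt by (simp add: field_simps)
  then have e: "2 * real_of_int k = real_of_int i * p0" by simp
  have "2 * real_of_int k * real_of_int (z (Suc \<alpha>)) = real_of_int i * (p0 * real_of_int (z (Suc \<alpha>)))"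
    unfolding e by (simp only: mult.assoc)
  then have "real_of_int (2 * k * z (Suc \<alpha>)) = real_of_int (i * y (Suc \<alpha>))"
    unfolding p0_mult_zz_last by simp
  then have "2 * k * z (Suc \<alpha>) = i * y (Suc \<alpha>)" by (simp only: of_int_eq_iff)
  then have "y (Suc \<alpha>) dvd 2 * k * z (Suc \<alpha>)" by simp
  then have "y (Suc \<alpha>) dvd 2 * k"
    using coprime_yy_zz by (simp add: coprime_dvd_mult_left_iff)
  then have "y (Suc \<alpha>) \<le> 2 * k" using assms(1) by (intro zdvd_imp_le) auto
  with assms(2) show False by simp
qed

end

section \<open>Transfer matrices on lattice segments\<close>

locale transfer_matrix =
  fixes p0 :: real and N m :: nat and u :: complex and \<omega> :: "nat \<Rightarrow> complex"
  assumes p0_pos: "p0 > 0"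
begin

abbreviation "\<theta> \<equiv> pi / p0"
abbreviation "Q \<equiv> Qf \<theta> m \<omega>"
abbreviation "T \<equiv> Tf \<theta> N m u \<omega>"

definition G :: "complex \<Rightarrow> complex" where
  "G x = phif \<theta> N (x - \<i> * (u + 2)) * phif \<theta> N (x + \<i> * u) / (Q x * Q (x - 2 * \<i>))"

definition Gsum :: "complex \<Rightarrow> int \<Rightarrow> nat \<Rightarrow> complex" where
  "Gsum x a n = (\<Sum>j = 1..n. G (x + \<i> * of_int (a + 2 * int j)))"

text \<open>\<open>tau a b x\<close> is \<open>T\<^bsub>(b-a)/2 - 1\<^esub>(x + i(a+b)/2)\<close>: the transfer matrix attached to the segment
  \<open>[a, b]\<close> of the lattice \<open>x + i\<int>\<close>; only even \<open>b - a \<ge> 0\<close> are meaningful.\<close>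

definition tau :: "int \<Rightarrow> int \<Rightarrow> complex \<Rightarrow> complex" where
  "tau a b x = Q (x + \<i> * of_int b) * Q (x + \<i> * of_int a) * Gsum x a (nat ((b - a) div 2))"

lemma T_eq_Gsum:
  "T n v = Q (v + \<i> * of_nat n) * Q (v - \<i> * of_nat n) * (\<Sum>j = 1..n. G (v + \<i> * (2 * of_nat j - of_nat n)))"
  unfolding Tf_def sum_distrib_left
proof (rule sum.cong[OF refl])
  fix j
  have "v - \<i> * (u + of_nat n + 2 - 2 * of_nat j) = (v + \<i> * (2 * of_nat j - of_nat n)) - \<i> * (u + 2)"
    "v + \<i> * (u - of_nat n + 2 * of_nat j) = (v + \<i> * (2 * of_nat j - of_nat n)) + \<i> * u"
    "v + \<i> * (2 * of_nat j - of_nat n - 2) = (v + \<i> * (2 * of_nat j - of_nat n)) - 2 * \<i>"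
    by (simp_all add: algebra_simps)
  then show "phif \<theta> N (v - \<i> * (u + of_nat n + 2 - 2 * of_nat j)) * phif \<theta> N (v + \<i> * (u - of_nat n + 2 * of_nat j))
      * (Q (v + \<i> * of_nat n) * Q (v - \<i> * of_nat n))
      / (Q (v + \<i> * (2 * of_nat j - of_nat n)) * Q (v + \<i> * (2 * of_nat j - of_nat n - 2)))
    = Q (v + \<i> * of_nat n) * Q (v - \<i> * of_nat n) * G (v + \<i> * (2 * of_nat j - of_nat n))"
    unfolding G_def by (simp add: field_simps)
qed

lemma T_eq_tau: "0 \<le> n \<Longrightarrow> T (nat n) (x + \<i> * of_int c) = tau (c - n) (c + n) x"
  unfolding T_eq_Gsum tau_def Gsum_def
  by (intro arg_cong2[where f="(*)"] sum.cong arg_cong[where f=G] arg_cong[where f=Q])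
     (simp_all add: algebra_simps)

lemma Gsum_add: "Gsum x a (p + q) = Gsum x a p + Gsum x (a + 2 * int p) q"
proof -
  have "Gsum x a (p + q) = Gsum x a p + (\<Sum>j = p + 1..p + q. G (x + \<i> * of_int (a + 2 * int j)))"
    unfolding Gsum_def by (rule sum.ub_add_nat) simp
  also have "(\<Sum>j = p + 1..p + q. G (x + \<i> * of_int (a + 2 * int j))) = Gsum x (a + 2 * int p) q"
    unfolding Gsum_def
    by (rule sum.reindex_bij_witness[where i="\<lambda>j. j + p" and j="\<lambda>j. j - p"]) (auto simp: algebra_simps)
  finally show ?thesis .
qed

text \<open>The three-term Pluecker relation: since \<open>tau a b = Q(a) Q(b) (S(b) - S(a))\<close> for a
  primitive \<open>S\<close> of \<open>G\<close> along the lattice, it reduces to the identity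
  \<open>(s\<^sub>D - s\<^sub>B)(s\<^sub>C - s\<^sub>A) = (s\<^sub>D - s\<^sub>A)(s\<^sub>C - s\<^sub>B) + (s\<^sub>D - s\<^sub>C)(s\<^sub>B - s\<^sub>A)\<close>.\<close>

lemma tau_pluecker:
  assumes "A \<le> B" "B \<le> C" "C \<le> D" "even (B - A)" "even (C - B)" "even (D - C)"
  shows "tau B D x * tau A C x = tau A D x * tau B C x + tau C D x * tau A B x"
proof -
  obtain p q r where "B = A + 2 * int p" "C = B + 2 * int q" "D = C + 2 * int r"
    using assms by (metis evenE diff_ge_0_iff_ge nonneg_int_cases add.commute diff_add_cancel
        zero_le_mult_iff zero_less_numeral not_less)
  then show ?thesis
    unfolding tau_def by (simp add: Gsum_add algebra_simps nat_add_distrib)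
qed

abbreviation "period \<equiv> 2 * \<i> * complex_of_real p0"

lemma sinh_add_period: "sinh (complex_of_real (\<theta> / 2) * (x + period)) = - sinh (complex_of_real (\<theta> / 2) * x)"
proof -
  have "complex_of_real (\<theta> / 2) * (x + period) = complex_of_real (\<theta> / 2) * x + \<i> * of_real pi"
    using p0_pos by (simp add: field_simps)
  then show ?thesis by (simp add: sinh_add_i_pi)
qed

lemma Q_add_period: "Q (x + period) = (-1) ^ m * Q x"
proof -
  have "Q (x + period) = (\<Prod>k = 1..m. (-1) * sinh (complex_of_real (\<theta> / 2) * (x - \<omega> k)))"
    unfolding Qf_def
  proof (rule prod.cong[OF refl])
    fix k
    show "sinh (complex_of_real (\<theta> / 2) * (x + period - \<omega> k)) = (-1) * sinh (complex_of_real (\<theta> / 2) * (x - \<omega> k))"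
      using sinh_add_period[of "x - \<omega> k"] by (simp add: algebra_simps)
  qed
  then show ?thesis unfolding prod.distrib Qf_def by simp
qed

lemma Q_add_nat_period: "Q (x + of_nat b * period) = (-1) ^ (m * b) * Q x"
proof (induction b)
  case (Suc b)
  have "Q (x + of_nat (Suc b) * period) = (-1) ^ m * Q (x + of_nat b * period)"
    using Q_add_period[of "x + of_nat b * period"] by (simp add: algebra_simps)
  then show ?case using Suc by (simp add: power_add)
qed simp

lemma phif_add_period: "phif \<theta> N (x + period) = (-1) ^ (N div 2) * phif \<theta> N x"
  unfolding phif_def sinh_add_period by (simp add: power_mult_distrib[symmetric])

lemma neg_one_power_square: "((-1::complex) ^ k) * (-1) ^ k = 1"
  by (simp add: power_mult_distrib[symmetric])

lemma G_add_period: "G (x + period) = G x"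
proof -
  have shifts: "x + period - \<i> * (u + 2) = (x - \<i> * (u + 2)) + period" "x + period + \<i> * u = (x + \<i> * u) + period"
    "x + period - 2 * \<i> = (x - 2 * \<i>) + period"
    by (simp_all add: algebra_simps)
  show ?thesis unfolding G_def shifts phif_add_period Q_add_period
    by (simp add: field_simps neg_one_power_square)
qed

lemma T_add_period: "T n (x + period) = T n x"
proof -
  have shifts: "x + period + \<i> * of_nat n = (x + \<i> * of_nat n) + period" "x + period - \<i> * of_nat n = (x - \<i> * of_nat n) + period"
    "\<And>j. x + period + \<i> * (2 * of_nat j - of_nat n) = (x + \<i> * (2 * of_nat j - of_nat n)) + period"
    by (simp_all add: algebra_simps)
  show ?thesis unfolding T_eq_Gsum shifts Q_add_period G_add_period
    by (simp add: neg_one_power_square algebra_simps)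
qed

lemma lattice_shift_by_periods:
  assumes "p0 * real b = real_of_int a"
  shows "x + \<i> * of_int (e - 2 * a) + of_nat b * period = x + \<i> * of_int e"
proof -
  have "complex_of_int a = of_real p0 * of_nat b"
    by (metis assms of_real_mult of_real_of_int_eq of_real_of_nat_eq)
  then show ?thesis by (simp add: algebra_simps)
qed

lemma Q_shift_by_periods:
  assumes "p0 * real b = real_of_int a"
  shows "Q (x + \<i> * of_int (e - 2 * a)) = (-1) ^ (m * b) * Q (x + \<i> * of_int e)"
  using Q_add_nat_period[of "x + \<i> * of_int (e - 2 * a)" b] neg_one_power_square[of "m * b"]
  unfolding lattice_shift_by_periods[OF assms] by (simp add: mult.assoc[symmetric])

lemma Gsum_shift_by_periods:
  assumes "p0 * real b = real_of_int a"
  shows "Gsum x (c - 2 * a) n = Gsum x c n"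
  unfolding Gsum_def
proof (intro sum.cong refl)
  fix j
  have G: "G (x + \<i> * of_int (e - 2 * a)) = G (x + \<i> * of_int e)" for e
    using periodic_add_of_int_mult[of G period, OF G_add_period, of "x + \<i> * of_int (e - 2 * a)" "int b"]
    unfolding of_int_of_nat_eq lattice_shift_by_periods[OF assms] by (rule sym)
  have "c - 2 * a + 2 * int j = (c + 2 * int j) - 2 * a" by simp
  then show "G (x + \<i> * of_int (c - 2 * a + 2 * int j)) = G (x + \<i> * of_int (c + 2 * int j))"
    by (simp only: G)
qed

text \<open>Both \<open>Q\<close> factors of \<open>tau\<close> acquire the same sign \<open>(-1)\<^sup>m\<^sup>b\<close>.\<close>

lemma tau_shift_by_periods:
  assumes "p0 * real b = real_of_int a"
  shows "tau (c - 2 * a) (d - 2 * a) x = tau c d x"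
proof -
  have "nat ((d - 2 * a - (c - 2 * a)) div 2) = nat ((d - c) div 2)" by simp
  then have "tau (c - 2 * a) (d - 2 * a) x = ((-1) ^ (m * b) * (-1) ^ (m * b)) * tau c d x"
    unfolding tau_def Q_shift_by_periods[OF assms] Gsum_shift_by_periods[OF assms] by (simp only: mult_ac)
  then show ?thesis unfolding neg_one_power_square by simp
qed

text \<open>The shift by \<open>2a\<close> identifies the segment \<open>[-a - y, y - a]\<close> with \<open>[a - y, a + y]\<close>, so
  both factors on the left are built from the same two partial sums of \<open>G\<close>.\<close>

lemma tau_product_eq_square:
  assumes ab: "p0 * real b = real_of_int a" and y: "0 \<le> y" "y \<le> a"
  shows "tau (y - a) (a + y) x * tau (- a - y) (a - y) x
    = (tau (a - y) (a + y) x + (-1) ^ (m * b) * tau (y - a) (a - y) x)\<^sup>2"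
proof -
  obtain p q where pq: "a - y = int p" "y = int q"
    using y by (metis diff_ge_0_iff_ge nonneg_int_cases)
  define \<sigma> :: complex where "\<sigma> = (-1) ^ (m * b)"
  define QC QD where "QC = Q (x + \<i> * of_int (a - y))" and "QD = Q (x + \<i> * of_int (a + y))"
  define SBC SCD where "SBC = Gsum x (y - a) p" and "SCD = Gsum x (a - y) q"
  have QA: "Q (x + \<i> * of_int (- a - y)) = \<sigma> * QC"
    using Q_shift_by_periods[OF ab, of x "a - y"] unfolding \<sigma>_def QC_def by (simp add: algebra_simps)
  have QB: "Q (x + \<i> * of_int (y - a)) = \<sigma> * QD"
    using Q_shift_by_periods[OF ab, of x "a + y"] unfolding \<sigma>_def QD_def by (simp add: algebra_simps)
  have SAB: "Gsum x (- a - y) q = SCD"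
    using Gsum_shift_by_periods[OF ab, of x "a - y" q] unfolding SCD_def by (simp add: algebra_simps)
  have n: "nat ((a + y - (y - a)) div 2) = p + q" "nat ((a - y - (- a - y)) div 2) = q + p"
    "nat ((a + y - (a - y)) div 2) = q" "nat ((a - y - (y - a)) div 2) = p"
    using pq by simp_all
  have S: "Gsum x (y - a) (p + q) = SBC + SCD"
    unfolding Gsum_add SBC_def SCD_def using pq by (simp add: algebra_simps)
  have S': "Gsum x (- a - y) (q + p) = SCD + SBC"
    unfolding Gsum_add SBC_def SAB[symmetric] using pq by (simp add: algebra_simps)
  have "tau (y - a) (a + y) x = QD * (\<sigma> * QD) * (SBC + SCD)"
    unfolding tau_def n QB QD_def S ..
  moreover have "tau (- a - y) (a - y) x = QC * (\<sigma> * QC) * (SCD + SBC)"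
    unfolding tau_def n QA QC_def S' by simp
  moreover have "tau (a - y) (a + y) x = QD * QC * SCD"
    unfolding tau_def QC_def QD_def SCD_def n ..
  moreover have "tau (y - a) (a - y) x = QC * (\<sigma> * QD) * SBC"
    unfolding tau_def n QB QC_def SBC_def ..
  moreover have "\<sigma> * \<sigma> = 1" unfolding \<sigma>_def by (rule neg_one_power_square)
  ultimately show ?thesis unfolding \<sigma>_def[symmetric] power2_eq_square by (simp add: algebra_simps)
qed


definition Yratio :: "complex \<Rightarrow> int \<Rightarrow> int \<Rightarrow> complex" where
  "Yratio x n k = T (nat (n + k)) x * T (nat (n - k)) x / (T (nat k) (x + \<i> * of_int n) * T (nat k) (x - \<i> * of_int n))"

text \<open>In terms of \<open>tau\<close>, \<open>Yratio (x + i c) n k\<close> is a cross ratio of the four lattice points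
  \<open>A < B \<le> C < D\<close> with \<open>B - A = D - C = 2k\<close>, and \<open>1 + Yratio\<close> is the complementary
  cross ratio by the Pluecker relation.\<close>

lemma Yratio_eq_tau:
  assumes "A = c - n - k" "B = c + k - n" "C = c + n - k" "D = c + n + k" "0 \<le> k" "k \<le> n"
  shows "Yratio (x + \<i> * of_int c) n k = tau A D x * tau B C x / (tau C D x * tau A B x)"
proof -
  have shifts: "x + \<i> * of_int c + \<i> * of_int n = x + \<i> * of_int (c + n)"
    "x + \<i> * of_int c - \<i> * of_int n = x + \<i> * of_int (c - n)"
    by (simp_all add: algebra_simps)
  have "T (nat (n + k)) (x + \<i> * of_int c) = tau (c - n - k) (c + n + k) x"
    using T_eq_tau[of "n + k" x c] assms by (simp add: algebra_simps)
  moreover have "T (nat (n - k)) (x + \<i> * of_int c) = tau (c + k - n) (c + n - k) x"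
    using T_eq_tau[of "n - k" x c] assms by (simp add: algebra_simps)
  moreover have "T (nat k) (x + \<i> * of_int (c + n)) = tau (c + n - k) (c + n + k) x"
    using T_eq_tau[of k x "c + n"] assms by (simp add: algebra_simps)
  moreover have "T (nat k) (x + \<i> * of_int (c - n)) = tau (c - n - k) (c + k - n) x"
    using T_eq_tau[of k x "c - n"] assms by (simp add: algebra_simps)
  ultimately show ?thesis unfolding Yratio_def shifts assms(1-4) by simp
qed

lemma one_plus_Yratio:
  assumes "A = c - n - k" "B = c + k - n" "C = c + n - k" "D = c + n + k" "0 \<le> k" "k \<le> n"
    and "tau C D x \<noteq> 0" "tau A B x \<noteq> 0"
  shows "1 + Yratio (x + \<i> * of_int c) n k = tau B D x * tau A C x / (tau C D x * tau A B x)"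
proof -
  have "tau B D x * tau A C x = tau A D x * tau B C x + tau C D x * tau A B x"
    by (rule tau_pluecker) (use assms in auto)
  then show ?thesis unfolding Yratio_eq_tau[OF assms(1-6)] using assms(7,8) by (simp add: field_simps)
qed

lemma Yratio_Y_system:
  assumes k: "0 \<le> k" "2*k \<le> n"
    and nz: "tau (n-2*k) n x \<noteq> 0" "tau (-n-2*k) (-n) x \<noteq> 0"
      "tau n (n+2*k) x \<noteq> 0" "tau (-n) (2*k-n) x \<noteq> 0"
  shows "Yratio (x + \<i> * of_int (-k)) n k * Yratio (x + \<i> * of_int k) n k
       = (1 + Yratio (x + \<i> * of_int 0) (n-k) k) * (1 + Yratio (x + \<i> * of_int 0) (n+k) k)"
proof -
  have e0: "Yratio (x + \<i> * of_int (-k)) n k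
      = tau (-n-2*k) n x * tau (-n) (n-2*k) x / (tau (n-2*k) n x * tau (-n-2*k) (-n) x)"
    by (rule Yratio_eq_tau) (use k in auto)
  have e1: "Yratio (x + \<i> * of_int k) n k
      = tau (-n) (n+2*k) x * tau (2*k-n) n x / (tau n (n+2*k) x * tau (-n) (2*k-n) x)"
    by (rule Yratio_eq_tau) (use k in auto)
  have e2: "1 + Yratio (x + \<i> * of_int 0) (n-k) k
      = tau (2*k-n) n x * tau (-n) (n-2*k) x / (tau (n-2*k) n x * tau (-n) (2*k-n) x)"
    by (rule one_plus_Yratio) (use k nz in auto)
  have e3: "1 + Yratio (x + \<i> * of_int 0) (n+k) k
      = tau (-n) (n+2*k) x * tau (-n-2*k) n x / (tau n (n+2*k) x * tau (-n-2*k) (-n) x)"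
    by (rule one_plus_Yratio) (use k nz in auto)
  show ?thesis unfolding e0 e1 e2 e3 using nz by (simp add: field_simps)
qed

lemma Yratio_Y_system_block_start:
  assumes k: "0 \<le> kp" "kp \<le> k"
    and nz: "tau (-3*k-kp) (-k-kp) x \<noteq> 0" "tau (-k+kp) (k+kp) x \<noteq> 0"
      "tau (-k-kp) (-k+kp) x \<noteq> 0" "tau (-k-kp) (k-kp) x \<noteq> 0"
      "tau (k+kp) (3*k+kp) x \<noteq> 0" "tau (k-kp) (k+kp) x \<noteq> 0"
  shows "Yratio (x + \<i> * of_int (-k)) (k+kp) k * Yratio (x + \<i> * of_int k) (k+kp) k
       = inverse (1 + Yratio (x + \<i> * of_int 0) k kp) * (1 + Yratio (x + \<i> * of_int 0) (2*k+kp) k)"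
proof -
  have e0: "Yratio (x + \<i> * of_int (-k)) (k+kp) k
      = tau (-3*k-kp) (k+kp) x * tau (-k-kp) (-k+kp) x / (tau (-k+kp) (k+kp) x * tau (-3*k-kp) (-k-kp) x)"
    by (rule Yratio_eq_tau) (use k nz in auto)
  have e1: "Yratio (x + \<i> * of_int k) (k+kp) k
      = tau (-k-kp) (3*k+kp) x * tau (k-kp) (k+kp) x / (tau (k+kp) (3*k+kp) x * tau (-k-kp) (k-kp) x)"
    by (rule Yratio_eq_tau) (use k nz in auto)
  have e2: "(1 + Yratio (x + \<i> * of_int 0) k kp)
      = tau (-k+kp) (k+kp) x * tau (-k-kp) (k-kp) x / (tau (k-kp) (k+kp) x * tau (-k-kp) (-k+kp) x)"
    by (rule one_plus_Yratio) (use k nz in auto)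
  have e3: "inverse (1 + Yratio (x + \<i> * of_int 0) k kp)
      = tau (k-kp) (k+kp) x * tau (-k-kp) (-k+kp) x / (tau (-k+kp) (k+kp) x * tau (-k-kp) (k-kp) x)"
    unfolding e2 using nz by simp
  have e4: "(1 + Yratio (x + \<i> * of_int 0) (2*k+kp) k)
      = tau (-k-kp) (3*k+kp) x * tau (-3*k-kp) (k+kp) x / (tau (k+kp) (3*k+kp) x * tau (-3*k-kp) (-k-kp) x)"
    by (rule one_plus_Yratio) (use k nz in auto)
  show ?thesis unfolding e3 unfolding e2 e4 unfolding e0 e1 using nz by (simp add: field_simps)
qed

lemma Yratio_Y_system_junction:
  assumes k: "0 \<le> k" "2*k \<le> n"
    and nz: "tau (-2*k) 0 x \<noteq> 0" "tau (-2*n) (-2*n+2*k) x \<noteq> 0"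
      "tau (-2*n) 0 x \<noteq> 0" "tau (-2*n-2*k) (-2*k) x \<noteq> 0"
      "tau (-2*n-2*k) (-2*n) x \<noteq> 0" "tau (2*k) (2*n+2*k) x \<noteq> 0"
      "tau (2*n) (2*n+2*k) x \<noteq> 0" "tau (2*n-2*k) (2*n) x \<noteq> 0"
      "tau 0 (2*k) x \<noteq> 0" "tau 0 (2*n) x \<noteq> 0"
  shows "(Yratio (x + \<i> * of_int (-(n-k))) n k * Yratio (x + \<i> * of_int (n-k)) n k)
       * (Yratio (x + \<i> * of_int (-(n+k))) n k * Yratio (x + \<i> * of_int (n+k)) n k)
     = ((1 + Yratio (x + \<i> * of_int (-n)) (n-k) k) * (1 + Yratio (x + \<i> * of_int n) (n-k) k))
       * ((1 + Yratio (x + \<i> * of_int (-k)) (n+k) n) * (1 + Yratio (x + \<i> * of_int k) (n+k) n))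
       * ((1 + Yratio (x + \<i> * of_int (-(n+k))) n k) * (1 + Yratio (x + \<i> * of_int (n+k)) n k))"
proof -
  have e0: "Yratio (x + \<i> * of_int (n-k)) n k
      = tau (-2*k) (2*n) x * tau 0 (2*n-2*k) x / (tau (2*n-2*k) (2*n) x * tau (-2*k) 0 x)"
    by (rule Yratio_eq_tau) (use k nz in auto)
  have e1: "Yratio (x + \<i> * of_int (-(n+k))) n k
      = tau (-2*n-2*k) 0 x * tau (-2*n) (-2*k) x / (tau (-2*k) 0 x * tau (-2*n-2*k) (-2*n) x)"
    by (rule Yratio_eq_tau) (use k nz in auto)
  have e2: "Yratio (x + \<i> * of_int (n+k)) n k
      = tau 0 (2*n+2*k) x * tau (2*k) (2*n) x / (tau (2*n) (2*n+2*k) x * tau 0 (2*k) x)"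
    by (rule Yratio_eq_tau) (use k nz in auto)
  have e3: "Yratio (x + \<i> * of_int (-(n-k))) n k
      = tau (-2*n) (2*k) x * tau (-2*n+2*k) 0 x / (tau 0 (2*k) x * tau (-2*n) (-2*n+2*k) x)"
    by (rule Yratio_eq_tau) (use k nz in auto)
  have e4: "(1 + Yratio (x + \<i> * of_int (n)) (n-k) (k))
      = tau (2*k) (2*n) x * tau 0 (2*n-2*k) x / (tau (2*n-2*k) (2*n) x * tau 0 (2*k) x)"
    by (rule one_plus_Yratio) (use k nz in auto)
  have e5: "(1 + Yratio (x + \<i> * of_int (-n)) (n-k) (k))
      = tau (-2*n+2*k) 0 x * tau (-2*n) (-2*k) x / (tau (-2*k) 0 x * tau (-2*n) (-2*n+2*k) x)"
    by (rule one_plus_Yratio) (use k nz in auto)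
  have e6: "(1 + Yratio (x + \<i> * of_int (-k)) (n+k) (n))
      = tau (-2*k) (2*n) x * tau (-2*n-2*k) 0 x / (tau 0 (2*n) x * tau (-2*n-2*k) (-2*k) x)"
    by (rule one_plus_Yratio) (use k nz in auto)
  have e7: "(1 + Yratio (x + \<i> * of_int k) (n+k) (n))
      = tau 0 (2*n+2*k) x * tau (-2*n) (2*k) x / (tau (2*k) (2*n+2*k) x * tau (-2*n) 0 x)"
    by (rule one_plus_Yratio) (use k nz in auto)
  have e8: "(1 + Yratio (x + \<i> * of_int (-(n+k))) n k)
      = tau (-2*n) 0 x * tau (-2*n-2*k) (-2*k) x / (tau (-2*k) 0 x * tau (-2*n-2*k) (-2*n) x)"
    by (rule one_plus_Yratio) (use k nz in auto)
  have e9: "(1 + Yratio (x + \<i> * of_int (n+k)) n k)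
      = tau (2*k) (2*n+2*k) x * tau 0 (2*n) x / (tau (2*n) (2*n+2*k) x * tau 0 (2*k) x)"
    by (rule one_plus_Yratio) (use k nz in auto)
  show ?thesis unfolding e4 e5 e6 e7 e8 e9 unfolding e0 e1 e2 e3 using nz by (simp add: field_simps)
qed

lemma Yratio_Y_system_junction_nu_1:
  assumes k: "0 \<le> kp" "kp \<le> k" "n = k + kp"
    and nz: "tau (-2*k) 0 x \<noteq> 0" "tau (-2*k-2*kp) (-2*k) x \<noteq> 0"
      "tau (-2*k-2*kp) (-2*kp) x \<noteq> 0" "tau (-2*k-2*kp) 0 x \<noteq> 0"
      "tau (-2*kp) 0 x \<noteq> 0" "tau (-4*k-2*kp) (-2*k) x \<noteq> 0"
      "tau (-4*k-2*kp) (-2*k-2*kp) x \<noteq> 0" "tau (2*k) (2*k+2*kp) x \<noteq> 0"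
      "tau (2*k) (4*k+2*kp) x \<noteq> 0" "tau (2*k+2*kp) (4*k+2*kp) x \<noteq> 0"
      "tau (2*kp) (2*k+2*kp) x \<noteq> 0" "tau 0 (2*k) x \<noteq> 0"
      "tau 0 (2*k+2*kp) x \<noteq> 0" "tau 0 (2*kp) x \<noteq> 0"
  shows "(Yratio (x + \<i> * of_int (-(n-k))) n k * Yratio (x + \<i> * of_int (n-k)) n k)
       * (Yratio (x + \<i> * of_int (-(n+k))) n k * Yratio (x + \<i> * of_int (n+k)) n k)
     = (inverse (1 + Yratio (x + \<i> * of_int (-n)) k kp) * inverse (1 + Yratio (x + \<i> * of_int n) k kp))
       * ((1 + Yratio (x + \<i> * of_int (-k)) (n+k) n) * (1 + Yratio (x + \<i> * of_int k) (n+k) n))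
       * ((1 + Yratio (x + \<i> * of_int (-(n+k))) n k) * (1 + Yratio (x + \<i> * of_int (n+k)) n k))"
proof -
  have e0: "Yratio (x + \<i> * of_int (n-k)) n k
      = tau (-2*k) (2*k+2*kp) x * tau 0 (2*kp) x / (tau (2*kp) (2*k+2*kp) x * tau (-2*k) 0 x)"
    by (rule Yratio_eq_tau) (use k nz in auto)
  have e1: "Yratio (x + \<i> * of_int (-(n+k))) n k
      = tau (-4*k-2*kp) 0 x * tau (-2*k-2*kp) (-2*k) x / (tau (-2*k) 0 x * tau (-4*k-2*kp) (-2*k-2*kp) x)"
    by (rule Yratio_eq_tau) (use k nz in auto)
  have e2: "Yratio (x + \<i> * of_int (n+k)) n k
      = tau 0 (4*k+2*kp) x * tau (2*k) (2*k+2*kp) x / (tau (2*k+2*kp) (4*k+2*kp) x * tau 0 (2*k) x)"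
    by (rule Yratio_eq_tau) (use k nz in auto)
  have e3: "Yratio (x + \<i> * of_int (-(n-k))) n k
      = tau (-2*k-2*kp) (2*k) x * tau (-2*kp) 0 x / (tau 0 (2*k) x * tau (-2*k-2*kp) (-2*kp) x)"
    by (rule Yratio_eq_tau) (use k nz in auto)
  have e4: "(1 + Yratio (x + \<i> * of_int n) k kp)
      = tau (2*kp) (2*k+2*kp) x * tau 0 (2*k) x / (tau (2*k) (2*k+2*kp) x * tau 0 (2*kp) x)"
    by (rule one_plus_Yratio) (use k nz in auto)
  have e5: "inverse (1 + Yratio (x + \<i> * of_int n) k kp)
      = tau (2*k) (2*k+2*kp) x * tau 0 (2*kp) x / (tau (2*kp) (2*k+2*kp) x * tau 0 (2*k) x)"
    unfolding e4 using nz by simp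
  have e6: "(1 + Yratio (x + \<i> * of_int (-n)) k kp)
      = tau (-2*k) 0 x * tau (-2*k-2*kp) (-2*kp) x / (tau (-2*kp) 0 x * tau (-2*k-2*kp) (-2*k) x)"
    by (rule one_plus_Yratio) (use k nz in auto)
  have e7: "inverse (1 + Yratio (x + \<i> * of_int (-n)) k kp)
      = tau (-2*kp) 0 x * tau (-2*k-2*kp) (-2*k) x / (tau (-2*k) 0 x * tau (-2*k-2*kp) (-2*kp) x)"
    unfolding e6 using nz by simp
  have e8: "(1 + Yratio (x + \<i> * of_int (-k)) (n+k) n)
      = tau (-2*k) (2*k+2*kp) x * tau (-4*k-2*kp) 0 x / (tau 0 (2*k+2*kp) x * tau (-4*k-2*kp) (-2*k) x)"
    by (rule one_plus_Yratio) (use k nz in auto)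
  have e9: "(1 + Yratio (x + \<i> * of_int k) (n+k) n)
      = tau 0 (4*k+2*kp) x * tau (-2*k-2*kp) (2*k) x / (tau (2*k) (4*k+2*kp) x * tau (-2*k-2*kp) 0 x)"
    by (rule one_plus_Yratio) (use k nz in auto)
  have e10: "(1 + Yratio (x + \<i> * of_int (-(n+k))) n k)
      = tau (-2*k-2*kp) 0 x * tau (-4*k-2*kp) (-2*k) x / (tau (-2*k) 0 x * tau (-4*k-2*kp) (-2*k-2*kp) x)"
    by (rule one_plus_Yratio) (use k nz in auto)
  have e11: "(1 + Yratio (x + \<i> * of_int (n+k)) n k)
      = tau (2*k) (4*k+2*kp) x * tau 0 (2*k+2*kp) x / (tau (2*k+2*kp) (4*k+2*kp) x * tau 0 (2*k) x)"
    by (rule one_plus_Yratio) (use k nz in auto)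
  show ?thesis unfolding e5 e7 unfolding e4 e6 e8 e9 e10 e11 unfolding e0 e1 e2 e3 using nz by (simp add: field_simps)
qed



definition Kratio :: "nat \<Rightarrow> int \<Rightarrow> int \<Rightarrow> complex \<Rightarrow> complex" where
  "Kratio b a k x = (-1) ^ (m * b) * T (nat (a - k)) x / T (nat k) (x + \<i> * of_int a)"

lemma Yratio_add_period: "Yratio (x + period) n k = Yratio x n k"
proof -
  have "x + period + \<i> * of_int n = (x + \<i> * of_int n) + period" "x + period - \<i> * of_int n = (x - \<i> * of_int n) + period"
    by (simp_all add: algebra_simps)
  then show ?thesis unfolding Yratio_def by (simp only: T_add_period)
qed

lemma Kratio_add_period: "Kratio b a k (x + period) = Kratio b a k x"
proof -
  have "x + period + \<i> * of_int a = (x + \<i> * of_int a) + period" by (simp add: algebra_simps)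
  then show ?thesis unfolding Kratio_def by (simp only: T_add_period)
qed

lemma one_plus_Yratio_eq_square:
  assumes ab: "p0 * real b = real_of_int a" and k: "0 \<le> k" "k \<le> a"
    and nz: "tau (a-k) (a+k) x \<noteq> 0"
  shows "1 + Yratio (x + \<i> * of_int 0) a k = (1 + Kratio b a k x)\<^sup>2"
proof -
  have AB: "tau (-a-k) (k-a) x = tau (a-k) (a+k) x"
    using tau_shift_by_periods[OF ab, of "a-k" "a+k" x] by (simp add: algebra_simps)
  have "1 + Yratio (x + \<i> * of_int 0) a k = tau (k-a) (a+k) x * tau (-a-k) (a-k) x / (tau (a-k) (a+k) x * tau (-a-k) (k-a) x)"
    by (rule one_plus_Yratio) (use k nz AB in auto)
  moreover have "T (nat (a - k)) x = tau (k-a) (a-k) x"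
    using T_eq_tau[of "a-k" x 0] k by simp
  moreover have "T (nat k) (x + \<i> * of_int a) = tau (a-k) (a+k) x"
    using T_eq_tau[of k x a] k by simp
  ultimately show ?thesis unfolding AB tau_product_eq_square[OF ab k] Kratio_def using nz
    by (simp add: field_simps power2_eq_square)
qed

lemma Kratio_product:
  assumes ab: "p0 * real b = real_of_int a" and k: "0 \<le> k" "2*k \<le> a"
    and nz: "tau a (a+2*k) x \<noteq> 0" "tau (a-2*k) a x \<noteq> 0"
  shows "Kratio b a k (x + \<i> * of_int (-k)) * Kratio b a k (x + \<i> * of_int k) = 1 + Yratio (x + \<i> * of_int 0) (a - k) k"
proof -
  have sh: "tau (-a) (2*k-a) x = tau a (a+2*k) x"
    using tau_shift_by_periods[OF ab, of a "a+2*k" x] by (simp add: algebra_simps)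
  have "1 + Yratio (x + \<i> * of_int 0) (a - k) k = tau (2*k-a) a x * tau (-a) (a-2*k) x / (tau (a-2*k) a x * tau (-a) (2*k-a) x)"
    by (rule one_plus_Yratio) (use k nz sh in auto)
  moreover have "T (nat (a - k)) (x + \<i> * of_int k) = tau (2*k-a) a x"
    using T_eq_tau[of "a-k" x k] k by (simp add: algebra_simps)
  moreover have "T (nat k) (x + \<i> * of_int k + \<i> * of_int a) = tau a (a+2*k) x"
  proof -
    have "x + \<i> * of_int k + \<i> * of_int a = x + \<i> * of_int (k + a)" by (simp add: algebra_simps)
    then show ?thesis using T_eq_tau[of k x "k+a"] k by (simp add: algebra_simps)
  qed
  moreover have "T (nat (a - k)) (x + \<i> * of_int (-k)) = tau (-a) (a-2*k) x"
    using T_eq_tau[of "a-k" x "-k"] k by (simp add: algebra_simps)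
  moreover have "T (nat k) (x + \<i> * of_int (-k) + \<i> * of_int a) = tau (a-2*k) a x"
  proof -
    have "x + \<i> * of_int (-k) + \<i> * of_int a = x + \<i> * of_int (a - k)" by (simp add: algebra_simps)
    then show ?thesis using T_eq_tau[of k x "a-k"] k by (simp add: algebra_simps)
  qed
  ultimately show ?thesis unfolding Kratio_def sh using nz
    by (simp add: field_simps neg_one_power_square)
qed

end

section \<open>Nonvanishing of the transfer matrices\<close>

locale bethe_solution = transfer_matrix +
  assumes N_pos: "N > 0" and N_even: "even N" and sin_theta: "sin (pi / p0) \<noteq> 0"
    and bethe: "\<forall>j\<in>{1..m}.
        sinh (complex_of_real (pi / p0 / 2) * (\<omega> j - \<i> * (u + 2))) \<noteq> 0
      \<and> sinh (complex_of_real (pi / p0 / 2) * (\<omega> j + \<i> * u)) \<noteq> 0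
      \<and> Qf (pi / p0) m \<omega> (\<omega> j - 2 * \<i>) \<noteq> 0
      \<and> - (((sinh (complex_of_real (pi / p0 / 2) * (\<omega> j + \<i> * (u + 2)))
             * sinh (complex_of_real (pi / p0 / 2) * (\<omega> j - \<i> * u)))
          / (sinh (complex_of_real (pi / p0 / 2) * (\<omega> j - \<i> * (u + 2)))
             * sinh (complex_of_real (pi / p0 / 2) * (\<omega> j + \<i> * u)))) ^ (N div 2))
        = Qf (pi / p0) m \<omega> (\<omega> j + 2 * \<i>) / Qf (pi / p0) m \<omega> (\<omega> j - 2 * \<i>)"
begin

definition F :: "complex \<Rightarrow> complex" where
  "F x = phif \<theta> N (x - \<i> * (u + 2)) * phif \<theta> N (x + \<i> * u)"

lemma G_eq_F: "G x = F x / (Q x * Q (x - 2 * \<i>))"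
  unfolding G_def F_def ..

lemma N_half_pos: "N div 2 > 0"
  using N_pos N_even by auto

lemma phif_eq_0_iff: "phif \<theta> N x = 0 \<longleftrightarrow> sinh (complex_of_real (\<theta> / 2) * x) = 0"
  unfolding phif_def using sin_theta N_half_pos by simp

lemma Qf_eq_0_iff: "Q x = 0 \<longleftrightarrow> (\<exists>l\<in>{1..m}. sinh (complex_of_real (\<theta> / 2) * (x - \<omega> l)) = 0)"
  unfolding Qf_def by (simp add: prod_zero_iff)

lemma sinh_theta_half_two_i: "sinh (complex_of_real (\<theta> / 2) * (2 * \<i> * of_real t)) = \<i> * of_real (sin (\<theta> * t))"
proof -
  have "complex_of_real (\<theta> / 2) * (2 * \<i> * of_real t) = \<i> * of_real (\<theta> * t)"
    by (simp add: of_real_divide of_real_mult)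
  then show ?thesis by (simp only: sinh_i_mult_of_real)
qed

lemma eventually_sinh_ne_0: "\<forall>\<^sub>\<approx>x. sinh (complex_of_real (\<theta> / 2) * (x + c)) \<noteq> 0"
proof (rule entire_eventually_ne_0)
  have arg: "complex_of_real (\<theta> / 2) * (\<i> * of_real p0 - c + c) = \<i> * of_real (pi / 2)"
    using p0_pos by (simp add: field_simps flip: of_real_mult) (simp add: of_real_mult)
  show "sinh (complex_of_real (\<theta> / 2) * (\<i> * of_real p0 - c + c)) \<noteq> 0"
    unfolding arg sinh_i_mult_of_real by simp
qed (intro analytic_intros)

lemma eventually_Q_ne_0: "\<forall>\<^sub>\<approx>x. Q (x + c) \<noteq> 0"
proof -
  have "\<forall>\<^sub>\<approx>x. \<forall>l\<in>{1..m}. sinh (complex_of_real (\<theta> / 2) * (x + (c - \<omega> l))) \<noteq> 0"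
    by (intro eventually_ball_finite ballI eventually_sinh_ne_0) auto
  then show ?thesis
    by eventually_elim (auto simp: Qf_eq_0_iff algebra_simps)
qed

lemma Q_i_u_plus_2_ne_0: "Q (\<i> * (u + 2)) \<noteq> 0"
proof
  assume "Q (\<i> * (u + 2)) = 0"
  then obtain l where l: "l \<in> {1..m}" "sinh (complex_of_real (\<theta> / 2) * (\<i> * (u + 2) - \<omega> l)) = 0"
    unfolding Qf_eq_0_iff by blast
  have "sinh (complex_of_real (\<theta> / 2) * (\<omega> l - \<i> * (u + 2))) = - sinh (complex_of_real (\<theta> / 2) * (\<i> * (u + 2) - \<omega> l))"
    by (simp flip: sinh_minus add: algebra_simps)
  with l bethe show False by auto
qed

text \<open>A root of \<open>Q\<close> at \<open>i u\<close> kills the left-hand side of its Bethe equation, hence forces a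
  second root \<open>2i\<close> higher, which is excluded by the first nondegeneracy condition.\<close>

lemma Q_i_u_ne_0: "Q (\<i> * u) \<noteq> 0"
proof
  assume "Q (\<i> * u) = 0"
  then obtain l where l: "l \<in> {1..m}" "sinh (complex_of_real (\<theta> / 2) * (\<i> * u - \<omega> l)) = 0"
    unfolding Qf_eq_0_iff by blast
  define A where "A = complex_of_real (\<theta> / 2) * (\<omega> l - \<i> * u)"
  have "A = - (complex_of_real (\<theta> / 2) * (\<i> * u - \<omega> l))"
    unfolding A_def by (metis minus_diff_eq mult_minus_right)
  with l have sA: "sinh A = 0" by simp
  have "- (((sinh (complex_of_real (\<theta> / 2) * (\<omega> l + \<i> * (u + 2))) * sinh A)
          / (sinh (complex_of_real (\<theta> / 2) * (\<omega> l - \<i> * (u + 2)))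
             * sinh (complex_of_real (\<theta> / 2) * (\<omega> l + \<i> * u)))) ^ (N div 2))
        = Q (\<omega> l + 2 * \<i>) / Q (\<omega> l - 2 * \<i>)" and "Q (\<omega> l - 2 * \<i>) \<noteq> 0"
    using bethe l(1) unfolding A_def by auto
  then have "Q (\<omega> l + 2 * \<i>) = 0" using sA N_half_pos by (simp add: zero_power)
  then obtain l' where l': "l' \<in> {1..m}" "sinh (complex_of_real (\<theta> / 2) * (\<omega> l + 2 * \<i> - \<omega> l')) = 0"
    unfolding Qf_eq_0_iff by blast
  have "c * (\<omega> l' - \<i> * (u + 2)) = c * (\<omega> l - \<i> * u) - c * (\<omega> l + 2 * \<i> - \<omega> l')" for c :: complex
    by (simp add: algebra_simps)
  then have "complex_of_real (\<theta> / 2) * (\<omega> l' - \<i> * (u + 2)) = A - complex_of_real (\<theta> / 2) * (\<omega> l + 2 * \<i> - \<omega> l')"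
    unfolding A_def by blast
  then have "sinh (complex_of_real (\<theta> / 2) * (\<omega> l' - \<i> * (u + 2))) = 0"
    using sA l'(2) by (simp add: sinh_diff)
  with l'(1) bethe show False by auto
qed

text \<open>Clearing denominators turns \<open>G(x + D) = G(x)\<close> into an identity of entire functions;
  at \<open>x = i(u + 2) - D\<close> one side vanishes through \<open>\<phi>(0) = 0\<close>, while on the other side
  only the factor \<open>F\<close> can vanish.\<close>

lemma F_vanishes_if_G_periodic:
  assumes per: "\<forall>\<^sub>\<approx>x. G (x + D) = G x"
  shows "F (\<i> * (u + 2) - D) = 0"
proof -
  define f1 where "f1 x = F (x + D) * Q x * Q (x - 2 * \<i>)" for x
  define f2 where "f2 x = F x * Q (x + D) * Q (x + D - 2 * \<i>)" for x
  have "f1 analytic_on UNIV" "f2 analytic_on UNIV"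
    unfolding f1_def f2_def F_def using sin_theta by (intro analytic_intros; simp)+
  moreover have "\<forall>\<^sub>\<approx>x. f1 x = f2 x"
    using eventually_Q_ne_0[of 0] eventually_Q_ne_0[of "-2 * \<i>"] eventually_Q_ne_0[of D]
      eventually_Q_ne_0[of "D - 2 * \<i>"] per
  proof eventually_elim
    case (elim x)
    have shifts: "x + D - 2 * \<i> = x + (D - 2 * \<i>)" "x - 2 * \<i> = x + (-2 * \<i>)"
      by (simp_all add: algebra_simps)
    from elim(5) have "F (x + D) / (Q (x + D) * Q (x + D - 2 * \<i>)) = F x / (Q x * Q (x - 2 * \<i>))"
      unfolding G_eq_F by simp
    with elim(1-4) show ?case unfolding f1_def f2_def shifts by (simp add: field_simps)
  qed
  ultimately have "f1 (\<i> * (u + 2) - D) = f2 (\<i> * (u + 2) - D)"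
    by (rule entire_eq_if_eventually_eq)
  moreover have "f1 (\<i> * (u + 2) - D) = 0"
    unfolding f1_def F_def by (simp add: phif_eq_0_iff)
  moreover have "\<i> * (u + 2) - D + D - 2 * \<i> = \<i> * u" by (simp add: algebra_simps)
  ultimately have "F (\<i> * (u + 2) - D) * Q (\<i> * (u + 2)) * Q (\<i> * u) = 0"
    unfolding f2_def by simp
  with Q_i_u_ne_0 Q_i_u_plus_2_ne_0 show ?thesis by simp
qed

text \<open>Periods \<open>2ik\<close> and \<open>4ik\<close> would put zeros of \<open>\<phi>(x + iu)\<close> at both \<open>x = i(u + 2) - 2ik\<close>
  and \<open>x = i(u + 2) - 4ik\<close>, two points whose distance \<open>2ik\<close> is not a period of the zeros
  of \<open>\<phi>\<close> when \<open>sin(2\<theta>k) \<noteq> 0\<close>.\<close>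

lemma G_not_periodic:
  assumes sin_2t: "sin (2 * \<theta> * t) \<noteq> 0"
  shows "\<not> (\<forall>\<^sub>\<approx>x. G (x + 2 * \<i> * of_real t) = G x)"
proof
  assume per1: "\<forall>\<^sub>\<approx>x. G (x + 2 * \<i> * of_real t) = G x"
  have per2: "\<forall>\<^sub>\<approx>x. G (x + 2 * \<i> * of_real (2 * t)) = G x"
    using per1 eventually_cosparse_UNIV_translate[OF per1, of "2 * \<i> * of_real t"]
    by eventually_elim (simp add: algebra_simps)
  have sin_t: "sin (\<theta> * t) \<noteq> 0" "sin (\<theta> * (2 * t)) \<noteq> 0"
    using sin_2t sin_double[of "\<theta> * t"] by (auto simp: mult_ac)
  have zero: "sinh (complex_of_real (\<theta> / 2) * (\<i> * (2 * u + 2) - 2 * \<i> * of_real s)) = 0"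
    if "F (\<i> * (u + 2) - 2 * \<i> * of_real s) = 0" "sin (\<theta> * s) \<noteq> 0" for s
  proof -
    have "\<i> * (u + 2) - 2 * \<i> * of_real s - \<i> * (u + 2) = - (2 * \<i> * of_real s)"
      "\<i> * (u + 2) - 2 * \<i> * of_real s + \<i> * u = \<i> * (2 * u + 2) - 2 * \<i> * of_real s"
      by (simp_all add: algebra_simps)
    with that(1) have "phif \<theta> N (- (2 * \<i> * of_real s)) * phif \<theta> N (\<i> * (2 * u + 2) - 2 * \<i> * of_real s) = 0"
      unfolding F_def by simp
    moreover have "phif \<theta> N (- (2 * \<i> * of_real s)) \<noteq> 0"
      unfolding phif_eq_0_iff mult_minus_right sinh_minus sinh_theta_half_two_i using that(2) by simp
    ultimately have "phif \<theta> N (\<i> * (2 * u + 2) - 2 * \<i> * of_real s) = 0" by simp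
    then show ?thesis unfolding phif_eq_0_iff .
  qed
  have "sinh (complex_of_real (\<theta> / 2) * (\<i> * (2 * u + 2) - 2 * \<i> * of_real t)) = 0"
    by (rule zero[OF F_vanishes_if_G_periodic[OF per1] sin_t(1)])
  moreover have "sinh (complex_of_real (\<theta> / 2) * (\<i> * (2 * u + 2) - 2 * \<i> * of_real (2 * t))) = 0"
    by (rule zero[OF F_vanishes_if_G_periodic[OF per2] sin_t(2)])
  moreover have "complex_of_real (\<theta> / 2) * (2 * \<i> * of_real t)
    = complex_of_real (\<theta> / 2) * (\<i> * (2 * u + 2) - 2 * \<i> * of_real t)
      - complex_of_real (\<theta> / 2) * (\<i> * (2 * u + 2) - 2 * \<i> * of_real (2 * t))"
    by (simp add: algebra_simps)
  ultimately have "sinh (complex_of_real (\<theta> / 2) * (2 * \<i> * of_real t)) = 0"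
    by (simp add: sinh_diff)
  with sin_t show False unfolding sinh_theta_half_two_i by simp
qed

lemma sum_G_telescope:
  "(\<Sum>j = 1..k. G (v + 2 * \<i> + \<i> * (2 * of_nat j - of_nat k))) - (\<Sum>j = 1..k. G (v + \<i> * (2 * of_nat j - of_nat k)))
    = G (v + \<i> * (of_nat k + 2)) - G (v + \<i> * (2 - of_nat k))"
proof -
  define X where "X j = v + \<i> * (2 * of_nat j - of_nat k)" for j :: nat
  have "(\<Sum>j = 1..k. G (v + 2 * \<i> + \<i> * (2 * of_nat j - of_nat k))) = (\<Sum>j = 1..k. G (X (Suc j)))"
    unfolding X_def by (intro sum.cong refl arg_cong[where f=G]) (simp add: algebra_simps)
  then have "(\<Sum>j = 1..k. G (v + 2 * \<i> + \<i> * (2 * of_nat j - of_nat k))) - (\<Sum>j = 1..k. G (X j))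
      = (\<Sum>j = 1..k. G (X (Suc j)) - G (X j))"
    by (simp add: sum_subtractf)
  also have "\<dots> = G (X (Suc k)) - G (X 1)"
    by (rule sum_Suc_diff) simp
  moreover have "X (Suc k) = v + \<i> * (of_nat k + 2)" "X 1 = v + \<i> * (2 - of_nat k)"
    unfolding X_def by (simp_all add: algebra_simps)
  ultimately show ?thesis unfolding X_def by simp
qed

text \<open>\<open>T\<^sub>k\<^sub>-\<^sub>1\<close> is meromorphic, so it vanishes either almost nowhere or almost everywhere; in the latter
  case the sum of \<open>G\<close> in \<open>T\<^sub>k\<^sub>-\<^sub>1 = Q Q \<Sum> G\<close> vanishes, and comparing it with its shift by \<open>2i\<close>
  makes \<open>G\<close> periodic with period \<open>2ik\<close>.\<close>

lemma T_eventually_ne_0: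
  assumes sin_k: "sin (2 * \<theta> * real k) \<noteq> 0"
  shows "\<forall>\<^sub>\<approx>v. T k (v + c) \<noteq> 0"
proof (rule eventually_cosparse_UNIV_translate)
  define S where "S v = (\<Sum>j = 1..k. G (v + \<i> * (2 * of_nat j - of_nat k)))" for v
  have "\<not> (\<forall>\<^sub>\<approx>v. T k v = 0)"
  proof
    assume "\<forall>\<^sub>\<approx>v. T k v = 0"
    with eventually_Q_ne_0[of "\<i> * of_nat k"] eventually_Q_ne_0[of "- \<i> * of_nat k"]
    have S0: "\<forall>\<^sub>\<approx>v. S v = 0"
      by eventually_elim (simp add: T_eq_Gsum S_def)
    have "\<forall>\<^sub>\<approx>v. G (v + \<i> * (of_nat k + 2)) = G (v + \<i> * (2 - of_nat k))"
      using S0 eventually_cosparse_UNIV_translate[OF S0, of "2 * \<i>"]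
    proof eventually_elim
      case (elim v)
      have "S (v + 2 * \<i>) - S v = G (v + \<i> * (of_nat k + 2)) - G (v + \<i> * (2 - of_nat k))"
        unfolding S_def by (rule sum_G_telescope)
      with elim show ?case by simp
    qed
    from eventually_cosparse_UNIV_translate[OF this, of "\<i> * (of_nat k - 2)"]
    have "\<forall>\<^sub>\<approx>x. G (x + 2 * \<i> * of_real (real k)) = G x"
      by eventually_elim (simp add: algebra_simps)
    with G_not_periodic[OF sin_k] show False by blast
  qed
  then show "\<forall>\<^sub>\<approx>v. T k v \<noteq> 0"
    using meromorphic_imp_constant_or_avoid[of "T k" UNIV 0] Tf_meromorphic by auto
qed

end

section \<open>The Y-system\<close>

lemma neg_one_power_int_cases: "(-1::int) ^ r = 1 \<or> (-1::int) ^ r = -1"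
  by (cases "even r") auto

locale y_system = bethe_solution p0 N m u \<omega> + cf_value \<nu> \<alpha> p0 for p0 N m u \<omega> \<nu> \<alpha>
begin

abbreviation "Y \<equiv> Yf \<nu> \<alpha> p0 N m u \<omega>"
abbreviation "K \<equiv> Kf \<nu> \<alpha> p0 N m u \<omega>"

definition lattice_pt :: "int \<Rightarrow> int \<Rightarrow> complex" where
  "lattice_pt s c = \<i> * of_real (of_int s * p0 - of_int c)"

lemma pseq_lattice_pt: "\<i> * of_real (pseq \<nu> p0 r) = lattice_pt ((-1) ^ r * z r) ((-1) ^ r * y r)"
  unfolding lattice_pt_def pseq_eq by (simp add: algebra_simps)

text \<open>Shifts by \<open>2i p0\<close> are invisible to every \<open>T\<close>, so a shift by \<open>i(s p0 - c)\<close> of a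
  function evaluated at \<open>v + i w p0\<close> may be absorbed into a fixed base point \<open>v + i W p0\<close> as
  long as \<open>w + s \<equiv> W (mod 2)\<close>.\<close>

lemma rebase_lattice_pt:
  assumes per: "\<And>x. g (x + period) = g x" and "even (w + s - W)"
  shows "g (v + lattice_pt s c + \<i> * of_int w * of_real p0) = g (v + \<i> * of_int W * of_real p0 + \<i> * of_int (-c))"
proof -
  obtain t where "w + s = W + 2 * t" using assms(2) by (metis evenE diff_add_cancel add.commute)
  then have wst: "complex_of_int w + of_int s = of_int W + 2 * of_int t"
    by (metis of_int_add of_int_mult of_int_numeral)
  have "v + lattice_pt s c + \<i> * of_int w * of_real p0 = v + \<i> * of_real p0 * (of_int w + of_int s) - \<i> * of_int c"
    unfolding lattice_pt_def by (simp add: algebra_simps)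
  also have "\<dots> = (v + \<i> * of_int W * of_real p0 + \<i> * of_int (-c)) + of_int t * period"
    unfolding wst by (simp add: algebra_simps)
  finally show ?thesis by (simp only: periodic_add_of_int_mult[of g, OF per])
qed

lemma Yf_eq_Yratio:
  assumes q: "q < \<alpha>" "M q \<le> j" "j < M (Suc q)"
  shows "Y j v = Yratio (v + \<i> * of_int (z q + (j - M q) * z (Suc q) - 1) * of_real p0)
    (y q + (j + 1 - M q) * y (Suc q)) (y (Suc q))"
proof (cases "j = 0")
  case True
  have "q = 0"
  proof (rule ccontr)
    assume "q \<noteq> 0"
    then have "M 0 < M q" using q by (intro msum_strict_mono) auto
    then show False using q True by (simp add: msum_def)
  qed
  then have "y q + (j + 1 - M q) * y (Suc q) - y (Suc q) = 0" using True by (simp add: msum_def)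
  then show ?thesis using True unfolding Yratio_def by (simp add: Yf_def Tf_def)
next
  case False
  have j1: "M q < j + 1" "j + 1 \<le> M (Suc q)" using q by auto
  have shape: "T (nat (nt + k - 1 + 1)) (v + s) * T (nat (nt - k - 1 + 1)) (v + s)
      / (T (nat (k - 1 + 1)) (v + \<i> * of_int nt + s) * T (nat (k - 1 + 1)) (v - \<i> * of_int nt + s))
    = Yratio (v + s) nt k" for nt k s
  proof -
    have shifts: "v + \<i> * of_int nt + s = v + s + \<i> * of_int nt" "v - \<i> * of_int nt + s = v + s - \<i> * of_int nt"
      by (simp_all add: algebra_simps)
    show ?thesis unfolding Yratio_def shifts by simp
  qed
  show ?thesis using False
    unfolding Yf_def Let_def rw_eq[OF q] ntil_eq[OF q(1) j1] wcf_eq[OF q] ycf_of_nat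
    by (simp only: shape if_False)
qed

lemma Yf_at_lattice_pt:
  assumes "q < \<alpha>" "M q \<le> j" "j < M (Suc q)" "even (z q + (j - M q) * z (Suc q) - 1 + s - W)"
  shows "Y j (v + lattice_pt s c) = Yratio (v + \<i> * of_int W * of_real p0 + \<i> * of_int (-c))
    (y q + (j + 1 - M q) * y (Suc q)) (y (Suc q))"
  unfolding Yf_eq_Yratio[OF assms(1-3)]
  by (rule rebase_lattice_pt[of "\<lambda>x. Yratio x (y q + (j + 1 - M q) * y (Suc q)) (y (Suc q))", OF Yratio_add_period assms(4)])

lemma Yf_at_base:
  assumes "q < \<alpha>" "M q \<le> j" "j < M (Suc q)" "even (z q + (j - M q) * z (Suc q) - 1 - W)"
    and "n = y q + (j + 1 - M q) * y (Suc q)" "k = y (Suc q)" "x = v + \<i> * of_int W * of_real p0"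
  shows "Y j v = Yratio (x + \<i> * of_int 0) n k"
  using Yf_at_lattice_pt[OF assms(1-3), of 0 W v 0] assms(4-7) by (simp add: lattice_pt_def)

text \<open>The shifts \<open>\<plusminus>p\<^sub>r\<close> enter the functional relations only through symmetric pairs, which
  makes the sign \<open>(-1)\<^sup>r\<close> of \<open>p\<^sub>r\<close> irrelevant.\<close>

lemma pair_at_lattice_pt:
  fixes h :: "complex \<Rightarrow> complex"
  assumes at: "\<And>v s c. even (w + s - W) \<Longrightarrow> f (v + lattice_pt s c) = g (v + \<i> * of_int W * of_real p0 + \<i> * of_int (-c))"
    and \<sigma>: "\<sigma> = 1 \<or> \<sigma> = -1" and ev: "even (w + s - W)"
  shows "h (f (v + lattice_pt (\<sigma> * s) (\<sigma> * c))) * h (f (v - lattice_pt (\<sigma> * s) (\<sigma> * c)))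
    = h (g (v + \<i> * of_int W * of_real p0 + \<i> * of_int (-c))) * h (g (v + \<i> * of_int W * of_real p0 + \<i> * of_int c))"
proof -
  have minus: "v - lattice_pt a b = v + lattice_pt (-a) (-b)" for a b
    unfolding lattice_pt_def by (simp add: algebra_simps)
  have ev': "even (w + - s - W)" using ev by presburger
  from \<sigma> show ?thesis
  proof
    assume "\<sigma> = 1"
    then show ?thesis using at[OF ev, of v c] at[OF ev', of v "-c"] unfolding minus by simp
  next
    assume "\<sigma> = -1"
    then have eqs: "f (v + lattice_pt (\<sigma> * s) (\<sigma> * c)) = g (v + \<i> * of_int W * of_real p0 + \<i> * of_int c)"
      "f (v - lattice_pt (\<sigma> * s) (\<sigma> * c)) = g (v + \<i> * of_int W * of_real p0 + \<i> * of_int (-c))"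
      using at[OF ev, of v c] at[OF ev', of v "-c"] unfolding minus by simp_all
    show ?thesis unfolding eqs by (rule mult.commute)
  qed
qed

lemma Kf_eq: "K v = Kratio (nat (z (Suc \<alpha>))) (y (Suc \<alpha>)) (y \<alpha>) (v + \<i> * of_int (z (\<alpha> - 1) + (int (\<nu> \<alpha>) - 1) * z \<alpha> - 1) * of_real p0)"
proof -
  obtain q where q: "\<alpha> = Suc q" using alpha by (cases \<alpha>) auto
  then have q\<alpha>: "q < \<alpha>" by simp
  have Mq: "M \<alpha> = M q + int (\<nu> \<alpha>)" using q msum_Suc by simp
  have b1: "M q \<le> M \<alpha> - 1" "M \<alpha> - 1 < M (Suc q)" and b2: "M q < M \<alpha> - 1" "M \<alpha> - 1 \<le> M (Suc q)"
    using Mq q nu_last by auto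
  have w: "wcf \<nu> \<alpha> (M \<alpha> - 1) = z (\<alpha> - 1) + (int (\<nu> \<alpha>) - 1) * z \<alpha> - 1"
    unfolding wcf_eq[OF q\<alpha> b1] using q Mq by simp
  have nt: "ntil \<nu> \<alpha> (M \<alpha> - 1) = y (Suc \<alpha>) - y \<alpha>"
    unfolding ntil_eq[OF q\<alpha> b2] using q Mq by (simp add: algebra_simps)
  have yz: "ycf \<nu> (int \<alpha> - 1) = y \<alpha>" "ycf \<nu> (int \<alpha>) = y (Suc \<alpha>)" "zcf \<nu> (int \<alpha>) = z (Suc \<alpha>)"
    using ycf_of_nat[of \<alpha>] zcf_of_nat[of \<alpha>] by auto
  define s where "s = \<i> * of_int (z (\<alpha> - 1) + (int (\<nu> \<alpha>) - 1) * z \<alpha> - 1) * complex_of_real p0"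
  have shift: "v + \<i> * of_int (y (Suc \<alpha>)) + s = (v + s) + \<i> * of_int (y (Suc \<alpha>))" by (simp add: add_ac)
  show ?thesis unfolding Kf_def Let_def w nt yz s_def[symmetric] Kratio_def shift by simp
qed

lemma Kf_at_lattice_pt:
  assumes "even (z (\<alpha> - 1) + (int (\<nu> \<alpha>) - 1) * z \<alpha> - 1 + s - W)"
  shows "K (v + lattice_pt s c) = Kratio (nat (z (Suc \<alpha>))) (y (Suc \<alpha>)) (y \<alpha>) (v + \<i> * of_int W * of_real p0 + \<i> * of_int (-c))"
  unfolding Kf_eq
  by (rule rebase_lattice_pt[of "Kratio (nat (z (Suc \<alpha>))) (y (Suc \<alpha>)) (y \<alpha>)", OF Kratio_add_period assms])

lemma tau_eventually_ne_0:
  assumes "\<exists>r\<in>{1..\<alpha>}. b - a = 2 * y r"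
  shows "\<forall>\<^sub>\<approx>v. tau a b (v + c) \<noteq> 0"
proof -
  obtain r where r: "1 \<le> r" "r \<le> \<alpha>" "b - a = 2 * y r" using assms by auto
  have y_pos: "0 < y r" using yy_pos[of r] r by simp
  have "sin (2 * \<theta> * real (nat (y r))) \<noteq> 0"
    using sin_two_pi_div_p0_ne_0[of "y r"] y_pos yy_last_gt_twice[OF r(1,2)] by simp
  then have "\<forall>\<^sub>\<approx>v. T (nat (y r)) (v + (c + \<i> * of_int (a + y r))) \<noteq> 0"
    by (rule T_eventually_ne_0)
  moreover have "T (nat (y r)) (v + (c + \<i> * of_int (a + y r))) = tau a b (v + c)" for v
    using T_eq_tau[of "y r" "v + c" "a + y r"] y_pos r(3) by (simp add: algebra_simps)
  ultimately show ?thesis by simp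
qed

lemma Yf_pair_at_lattice_pt:
  fixes h :: "complex \<Rightarrow> complex"
  assumes "q < \<alpha>" "M q \<le> j" "j < M (Suc q)" "\<sigma> = 1 \<or> \<sigma> = -1"
    and "even (z q + (j - M q) * z (Suc q) - 1 + s - W)"
    and "n = y q + (j + 1 - M q) * y (Suc q)" "k = y (Suc q)" "x = v + \<i> * of_int W * of_real p0"
  shows "h (Y j (v + lattice_pt (\<sigma> * s) (\<sigma> * c))) * h (Y j (v - lattice_pt (\<sigma> * s) (\<sigma> * c)))
    = h (Yratio (x + \<i> * of_int (-c)) n k) * h (Yratio (x + \<i> * of_int c) n k)"
  unfolding assms(6-8)
  by (rule pair_at_lattice_pt[where f = "Y j" and g = "\<lambda>x. Yratio x (y q + (j + 1 - M q) * y (Suc q)) (y (Suc q))",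
        OF Yf_at_lattice_pt[OF assms(1-3)] assms(4,5)])

lemma Y_system_interior:
  assumes q: "q < \<alpha>" "M q < j" "j + 1 < M (Suc q)"
  shows "\<forall>\<^sub>\<approx>v. Y j (v + \<i> * of_real (pseq \<nu> p0 (Suc q))) * Y j (v - \<i> * of_real (pseq \<nu> p0 (Suc q)))
    = (1 + Y (j - 1) v) * (1 + Y (j + 1) v)"
proof -
  define k n where "k = y (Suc q)" and "n = y q + (j + 1 - M q) * y (Suc q)"
  define W where "W = z q + (j - M q) * z (Suc q) - 1 + z (Suc q)"
  define x where "x v = v + \<i> * of_int W * of_real p0" for v
  have k0: "0 \<le> k" unfolding k_def by (rule yy_nonneg)
  have "2 * k \<le> (j + 1 - M q) * k" using q k0 by (intro mult_right_mono) auto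
  then have k2n: "2 * k \<le> n" unfolding n_def k_def using yy_nonneg[of \<nu> q] by simp
  have shift: "\<i> * of_real (pseq \<nu> p0 (Suc q)) = lattice_pt ((-1) ^ Suc q * z (Suc q)) ((-1) ^ Suc q * k)"
    unfolding pseq_lattice_pt k_def ..
  have Yj: "Y j (v + \<i> * of_real (pseq \<nu> p0 (Suc q))) * Y j (v - \<i> * of_real (pseq \<nu> p0 (Suc q)))
      = Yratio (x v + \<i> * of_int (-k)) n k * Yratio (x v + \<i> * of_int k) n k" for v
    unfolding shift
    by (rule Yf_pair_at_lattice_pt[where h = "\<lambda>y. y" and W = W, OF q(1) _ _ neg_one_power_int_cases])
      (use q in \<open>auto simp: x_def n_def k_def W_def\<close>)
  have par: "even (z q + (j + 1 - M q) * z (Suc q) - 1 - W)" "even (z q + (j - 1 - M q) * z (Suc q) - 1 - W)"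
    unfolding W_def by (simp_all add: algebra_simps)
  have Ysucc: "Y (j + 1) v = Yratio (x v + \<i> * of_int 0) (n + k) k" for v
    by (rule Yf_at_base[OF q(1) _ _ par(1)]) (use q in \<open>auto simp: x_def n_def k_def algebra_simps\<close>)
  have Ypred: "Y (j - 1) v = Yratio (x v + \<i> * of_int 0) (n - k) k" for v
    by (rule Yf_at_base[OF q(1) _ _ par(2)]) (use q in \<open>auto simp: x_def n_def k_def algebra_simps\<close>)
  have "\<forall>\<^sub>\<approx>v. tau (n-2*k) n (x v) \<noteq> 0 \<and> tau (-n-2*k) (-n) (x v) \<noteq> 0
      \<and> tau n (n+2*k) (x v) \<noteq> 0 \<and> tau (-n) (2*k-n) (x v) \<noteq> 0"
    unfolding x_def by (intro eventually_conj tau_eventually_ne_0) (use q in \<open>auto simp: k_def\<close>)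
  then show ?thesis
  proof eventually_elim
    case (elim v)
    show ?case unfolding Yj Ysucc Ypred by (rule Yratio_Y_system) (use k0 k2n elim in auto)
  qed
qed

lemma Y_system_block_start:
  assumes q: "q = Suc p" "q < \<alpha>" "M q + 1 < M (Suc q)"
  shows "\<forall>\<^sub>\<approx>v. Y (M q) (v + \<i> * of_real (pseq \<nu> p0 (Suc q))) * Y (M q) (v - \<i> * of_real (pseq \<nu> p0 (Suc q)))
    = inverse (1 + Y (M q - 1) v) * (1 + Y (M q + 1) v)"
proof -
  define k kp where "k = y (Suc q)" and "kp = y q"
  define W where "W = z q - 1 + z (Suc q)"
  define x where "x v = v + \<i> * of_int W * of_real p0" for v
  have kp0: "0 \<le> kp" unfolding kp_def by (rule yy_nonneg)
  have kpk: "kp \<le> k" unfolding kp_def k_def using q by (intro yy_Suc_le) auto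
  have Mq: "M q = M p + int (\<nu> q)" using q msum_Suc by simp
  have shift: "\<i> * of_real (pseq \<nu> p0 (Suc q)) = lattice_pt ((-1) ^ Suc q * z (Suc q)) ((-1) ^ Suc q * k)"
    unfolding pseq_lattice_pt k_def ..
  have Yj: "Y (M q) (v + \<i> * of_real (pseq \<nu> p0 (Suc q))) * Y (M q) (v - \<i> * of_real (pseq \<nu> p0 (Suc q)))
      = Yratio (x v + \<i> * of_int (-k)) (k + kp) k * Yratio (x v + \<i> * of_int k) (k + kp) k" for v
    unfolding shift
    by (rule Yf_pair_at_lattice_pt[where h = "\<lambda>y. y" and W = W, OF q(2) _ _ neg_one_power_int_cases])
      (use q in \<open>auto simp: W_def x_def k_def kp_def\<close>)
  have Ysucc: "Y (M q + 1) v = Yratio (x v + \<i> * of_int 0) (2 * k + kp) k" for v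
    by (rule Yf_at_base[where q = q and W = W]) (use q(2,3) in \<open>auto simp: W_def x_def k_def kp_def\<close>)
  have Ypred: "Y (M q - 1) v = Yratio (x v + \<i> * of_int 0) k kp" for v
    by (rule Yf_at_base[where q = p and W = W])
      (use q Mq msum_strict_mono[of p q] in \<open>auto simp: W_def x_def k_def kp_def algebra_simps\<close>)
  have "\<forall>\<^sub>\<approx>v. tau (-3*k-kp) (-k-kp) (x v) \<noteq> 0 \<and> tau (-k+kp) (k+kp) (x v) \<noteq> 0
      \<and> tau (-k-kp) (-k+kp) (x v) \<noteq> 0 \<and> tau (-k-kp) (k-kp) (x v) \<noteq> 0
      \<and> tau (k+kp) (3*k+kp) (x v) \<noteq> 0 \<and> tau (k-kp) (k+kp) (x v) \<noteq> 0"
    unfolding x_def by (intro eventually_conj tau_eventually_ne_0) (use q(1,2) in \<open>auto simp: k_def kp_def simp del: yy.simps\<close>)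
  then show ?thesis
  proof eventually_elim
    case (elim v)
    show ?case unfolding Yj Ysucc Ypred by (rule Yratio_Y_system_block_start) (use kp0 kpk elim in auto)
  qed
qed

lemma Y_junction_pairs:
  assumes r: "r = Suc q" "r < \<alpha>" and j: "j = M r - 1"
    and pr: "pr = \<i> * of_real (pseq \<nu> p0 r)" and pr1: "pr1 = \<i> * of_real (pseq \<nu> p0 (Suc r))"
    and k: "k = y r" and n: "n = y (Suc r)"
    and x: "x = v + \<i> * of_int (z q + (j - M q) * z r - 1 + z r + z (Suc r)) * of_real p0"
  shows "Y j (v + (pr + pr1)) * Y j (v - (pr + pr1))
      = Yratio (x + \<i> * of_int (-(n-k))) n k * Yratio (x + \<i> * of_int (n-k)) n k"
    and "Y j (v + (pr - pr1)) * Y j (v - (pr - pr1))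
      = Yratio (x + \<i> * of_int (-(n+k))) n k * Yratio (x + \<i> * of_int (n+k)) n k"
    and "(1 + Y j (v + (pr - pr1))) * (1 + Y j (v - (pr - pr1)))
      = (1 + Yratio (x + \<i> * of_int (-(n+k))) n k) * (1 + Yratio (x + \<i> * of_int (n+k)) n k)"
    and "(1 + Y (j + 1) (v + pr)) * (1 + Y (j + 1) (v - pr))
      = (1 + Yratio (x + \<i> * of_int (-k)) (n+k) n) * (1 + Yratio (x + \<i> * of_int k) (n+k) n)"
proof -
  define w where "w = z q + (j - M q) * z r - 1"
  define W where "W = w + z r + z (Suc r)"
  define \<sigma> :: int where "\<sigma> = (-1) ^ r"
  have \<sigma>: "\<sigma> = 1 \<or> \<sigma> = -1" "- \<sigma> = 1 \<or> - \<sigma> = -1"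
    unfolding \<sigma>_def using neg_one_power_int_cases[of r] by auto
  have "\<nu> r \<ge> 1" using r nu_pos by auto
  then have jM: "j - M q = int (\<nu> r) - 1" and q: "q < \<alpha>" "M q \<le> j" "j < M (Suc q)"
    using r j msum_Suc[of \<nu> q] by auto
  have jr: "r < \<alpha>" "M r \<le> j + 1" "j + 1 < M (Suc r)" using r j msum_strict_mono[of r "Suc r"] by auto
  have zw: "z (Suc r) = w + z r + 1" unfolding w_def jM r(1) by (simp add: algebra_simps)
  have shifts: "pr + pr1 = lattice_pt (- \<sigma> * (z (Suc r) - z r)) (- \<sigma> * (n - k))"
    "pr - pr1 = lattice_pt (\<sigma> * (z r + z (Suc r))) (\<sigma> * (n + k))" "pr = lattice_pt (\<sigma> * z r) (\<sigma> * k)"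
    unfolding pr pr1 \<sigma>_def k n pseq_lattice_pt lattice_pt_def by (simp_all add: algebra_simps)
  have "z q + (j - M q) * z (Suc q) - 1 + (z (Suc r) - z r) - W = 2 * (- z r)"
    "z q + (j - M q) * z (Suc q) - 1 + (z r + z (Suc r)) - W = 2 * 0"
    unfolding W_def w_def r(1)[symmetric] by (simp_all add: algebra_simps)
  moreover have "z r + (j + 1 - M r) * z (Suc r) - 1 + z r - W = 2 * (- w - 1)"
    unfolding W_def using zw j by (simp add: algebra_simps)
  ultimately have par: "even (z q + (j - M q) * z (Suc q) - 1 + (z (Suc r) - z r) - W)"
    "even (z q + (j - M q) * z (Suc q) - 1 + (z r + z (Suc r)) - W)"
    "even (z r + (j + 1 - M r) * z (Suc r) - 1 + z r - W)"
    by (simp_all only: even_mult_iff even_numeral simp_thms)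
  have nj: "n = y q + (j + 1 - M q) * y (Suc q)" "n + k = y r + (j + 1 + 1 - M r) * y (Suc r)"
    using jM j unfolding n k r(1) by (simp_all add: algebra_simps)
  have x': "x = v + \<i> * of_int W * of_real p0" unfolding x W_def w_def ..
  show "Y j (v + (pr + pr1)) * Y j (v - (pr + pr1))
      = Yratio (x + \<i> * of_int (-(n-k))) n k * Yratio (x + \<i> * of_int (n-k)) n k"
    unfolding shifts(1)
    by (rule Yf_pair_at_lattice_pt[where W = W, OF q \<sigma>(2) par(1) nj(1) _ x']) (simp add: k r(1))
  show "Y j (v + (pr - pr1)) * Y j (v - (pr - pr1))
      = Yratio (x + \<i> * of_int (-(n+k))) n k * Yratio (x + \<i> * of_int (n+k)) n k"
    unfolding shifts(2)
    by (rule Yf_pair_at_lattice_pt[where W = W, OF q \<sigma>(1) par(2) nj(1) _ x']) (simp add: k r(1))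
  show "(1 + Y j (v + (pr - pr1))) * (1 + Y j (v - (pr - pr1)))
      = (1 + Yratio (x + \<i> * of_int (-(n+k))) n k) * (1 + Yratio (x + \<i> * of_int (n+k)) n k)"
    unfolding shifts(2)
    by (rule Yf_pair_at_lattice_pt[where W = W and h = "\<lambda>y. 1 + y", OF q \<sigma>(1) par(2) nj(1) _ x'])
      (simp add: k r(1))
  show "(1 + Y (j + 1) (v + pr)) * (1 + Y (j + 1) (v - pr))
      = (1 + Yratio (x + \<i> * of_int (-k)) (n+k) n) * (1 + Yratio (x + \<i> * of_int k) (n+k) n)"
    unfolding shifts(3)
    by (rule Yf_pair_at_lattice_pt[where W = W and h = "\<lambda>y. 1 + y", OF jr \<sigma>(1) par(3) nj(2) n x'])
qed

lemma Y_system_junction: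
  assumes r: "r = Suc q" "r < \<alpha>" "\<nu> r \<ge> 2" and j: "j = M r - 1"
    and pr: "pr = \<i> * of_real (pseq \<nu> p0 r)" and pr1: "pr1 = \<i> * of_real (pseq \<nu> p0 (Suc r))"
  shows "\<forall>\<^sub>\<approx>v. Y j (v + pr + pr1) * Y j (v + pr - pr1) * Y j (v - pr + pr1) * Y j (v - pr - pr1)
    = ((1 + Y (j - 1) (v + pr1)) * (1 + Y (j - 1) (v - pr1)))
      * (1 + Y (j + 1) (v + pr)) * (1 + Y (j + 1) (v - pr))
      * (1 + Y j (v + pr - pr1)) * (1 + Y j (v - pr + pr1))"
proof -
  define k n where "k = y r" and "n = y (Suc r)"
  define W where "W = z q + (j - M q) * z r - 1 + z r + z (Suc r)"
  define x where "x v = v + \<i> * of_int W * of_real p0" for v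
  note pairs = Y_junction_pairs[OF r(1,2) j pr pr1 k_def n_def x_def[unfolded W_def]]
  have jM: "j - M q = int (\<nu> r) - 1" using r j msum_Suc[of \<nu> q] by simp
  have q: "q < \<alpha>" "M q \<le> j - 1" "j - 1 < M (Suc q)" using r j jM msum_Suc[of \<nu> q] by auto
  have k0: "0 \<le> k" unfolding k_def by (rule yy_nonneg)
  have nk: "n = y q + int (\<nu> r) * k" unfolding n_def k_def r(1) by simp
  have "2 * k \<le> int (\<nu> r) * k" using r k0 by (intro mult_right_mono) auto
  then have k2n: "2 * k \<le> n" unfolding nk using yy_nonneg[of \<nu> q] by simp
  have pr1: "pr1 = lattice_pt (- ((-1) ^ r) * z (Suc r)) (- ((-1) ^ r) * n)"
    unfolding pr1 n_def pseq_lattice_pt lattice_pt_def by (simp add: algebra_simps)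
  have "z q + (j - 1 - M q) * z (Suc q) - 1 + z (Suc r) - W = 2 * (- z r)"
    unfolding W_def r(1)[symmetric] by (simp add: algebra_simps)
  then have par: "even (z q + (j - 1 - M q) * z (Suc q) - 1 + z (Suc r) - W)"
    by (simp only: even_mult_iff even_numeral simp_thms)
  have nj: "n - k = y q + (j - 1 + 1 - M q) * y (Suc q)" using jM unfolding nk k_def r(1) by (simp add: algebra_simps)
  have \<sigma>: "- ((-1::int) ^ r) = 1 \<or> - ((-1::int) ^ r) = -1" using neg_one_power_int_cases[of r] by auto
  have pair_pred: "(1 + Y (j - 1) (v + pr1)) * (1 + Y (j - 1) (v - pr1))
      = (1 + Yratio (x v + \<i> * of_int (-n)) (n-k) k) * (1 + Yratio (x v + \<i> * of_int n) (n-k) k)" for v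
    unfolding pr1
    by (rule Yf_pair_at_lattice_pt[where W = W and h = "\<lambda>y. 1 + y", OF q \<sigma> par nj])
      (simp_all add: k_def x_def r(1))
  have "\<forall>\<^sub>\<approx>v. tau (-2*k) 0 (x v) \<noteq> 0 \<and> tau (-2*n) (-2*n+2*k) (x v) \<noteq> 0 \<and> tau (-2*n) 0 (x v) \<noteq> 0
      \<and> tau (-2*n-2*k) (-2*k) (x v) \<noteq> 0 \<and> tau (-2*n-2*k) (-2*n) (x v) \<noteq> 0
      \<and> tau (2*k) (2*n+2*k) (x v) \<noteq> 0 \<and> tau (2*n) (2*n+2*k) (x v) \<noteq> 0
      \<and> tau (2*n-2*k) (2*n) (x v) \<noteq> 0 \<and> tau 0 (2*k) (x v) \<noteq> 0 \<and> tau 0 (2*n) (x v) \<noteq> 0"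
    unfolding x_def by (intro eventually_conj tau_eventually_ne_0) (use r in \<open>auto simp: k_def n_def simp del: yy.simps\<close>)
  then show ?thesis
  proof eventually_elim
    case (elim v)
    have "Y j (v + pr + pr1) * Y j (v + pr - pr1) * Y j (v - pr + pr1) * Y j (v - pr - pr1)
        = (Y j (v + (pr + pr1)) * Y j (v - (pr + pr1))) * (Y j (v + (pr - pr1)) * Y j (v - (pr - pr1)))"
      by (simp add: algebra_simps)
    also have "\<dots> = ((1 + Y (j - 1) (v + pr1)) * (1 + Y (j - 1) (v - pr1)))
        * ((1 + Y (j + 1) (v + pr)) * (1 + Y (j + 1) (v - pr)))
        * ((1 + Y j (v + (pr - pr1))) * (1 + Y j (v - (pr - pr1))))"
      unfolding pairs pair_pred by (rule Yratio_Y_system_junction) (use k0 k2n elim in auto)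
    finally show ?case by (simp add: algebra_simps)
  qed
qed

lemma Y_system_junction_nu_1:
  assumes r: "r = Suc q" "q = Suc p" "r < \<alpha>" "\<nu> r = 1" and j: "j = M r - 1"
    and pr: "pr = \<i> * of_real (pseq \<nu> p0 r)" and pr1: "pr1 = \<i> * of_real (pseq \<nu> p0 (Suc r))"
  shows "\<forall>\<^sub>\<approx>v. Y j (v + pr + pr1) * Y j (v + pr - pr1) * Y j (v - pr + pr1) * Y j (v - pr - pr1)
    = (inverse (1 + Y (j - 1) (v + pr1)) * inverse (1 + Y (j - 1) (v - pr1)))
      * (1 + Y (j + 1) (v + pr)) * (1 + Y (j + 1) (v - pr))
      * (1 + Y j (v + pr - pr1)) * (1 + Y j (v - pr + pr1))"
proof -
  define k kp n where "k = y r" and "kp = y q" and "n = y (Suc r)"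
  define W where "W = z q + (j - M q) * z r - 1 + z r + z (Suc r)"
  define x where "x v = v + \<i> * of_int W * of_real p0" for v
  note pairs = Y_junction_pairs[OF r(1,3) j pr pr1 k_def n_def x_def[unfolded W_def]]
  have jM: "j = M q" unfolding j r(1) msum_Suc using r(4) r(1) by simp
  have Mq: "M q = M p + int (\<nu> q)" unfolding r(2) msum_Suc ..
  have p: "p < \<alpha>" "M p \<le> j - 1" "j - 1 < M (Suc p)"
    using r jM Mq msum_strict_mono[of p q] by auto
  have kp0: "0 \<le> kp" unfolding kp_def by (rule yy_nonneg)
  have kpk: "kp \<le> k" unfolding kp_def k_def using r yy_Suc_le[of q] by simp
  have yr: "y (Suc r) = y r + y q" "y r = y p + int (\<nu> q) * y q" using r by simp_all
  then have n: "n = k + kp" unfolding n_def k_def kp_def by simp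
  have pr1: "pr1 = lattice_pt (- ((-1) ^ r) * z (Suc r)) (- ((-1) ^ r) * n)"
    unfolding pr1 n_def pseq_lattice_pt lattice_pt_def by (simp add: algebra_simps)
  have "z p + (j - 1 - M p) * z (Suc p) - 1 + z (Suc r) - W = 2 * (- z q)"
    unfolding W_def using jM Mq j r by (simp add: algebra_simps)
  then have par: "even (z p + (j - 1 - M p) * z (Suc p) - 1 + z (Suc r) - W)"
    by (simp only: even_mult_iff even_numeral simp_thms)
  have nj: "k = y p + (j - 1 + 1 - M p) * y (Suc p)" unfolding k_def using jM Mq yr r(2) by simp
  have \<sigma>: "- ((-1::int) ^ r) = 1 \<or> - ((-1::int) ^ r) = -1" using neg_one_power_int_cases[of r] by auto
  have pair_pred: "inverse (1 + Y (j - 1) (v + pr1)) * inverse (1 + Y (j - 1) (v - pr1))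
      = inverse (1 + Yratio (x v + \<i> * of_int (-n)) k kp) * inverse (1 + Yratio (x v + \<i> * of_int n) k kp)" for v
    unfolding pr1
    by (rule Yf_pair_at_lattice_pt[where W = W and h = "\<lambda>y. inverse (1 + y)", OF p \<sigma> par nj])
      (simp_all add: kp_def x_def r(2))
  have ranks: "r \<in> {1..\<alpha>}" "q \<in> {1..\<alpha>}" "Suc r \<in> {1..\<alpha>}" using r by auto
  have "\<exists>r\<in>{1..\<alpha>}. 2 * k = 2 * y r" by (rule bexI[OF _ ranks(1)]) (simp add: k_def)
  moreover have "\<exists>r\<in>{1..\<alpha>}. 2 * kp = 2 * y r" by (rule bexI[OF _ ranks(2)]) (simp add: kp_def)
  moreover have "\<exists>r\<in>{1..\<alpha>}. 2 * k + 2 * kp = 2 * y r" by (rule bexI[OF _ ranks(3)]) (simp add: n_def[symmetric] n)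
  ultimately have "\<forall>\<^sub>\<approx>v. tau (-2*k) 0 (x v) \<noteq> 0 \<and> tau (-2*k-2*kp) (-2*k) (x v) \<noteq> 0
      \<and> tau (-2*k-2*kp) (-2*kp) (x v) \<noteq> 0 \<and> tau (-2*k-2*kp) 0 (x v) \<noteq> 0 \<and> tau (-2*kp) 0 (x v) \<noteq> 0
      \<and> tau (-4*k-2*kp) (-2*k) (x v) \<noteq> 0 \<and> tau (-4*k-2*kp) (-2*k-2*kp) (x v) \<noteq> 0
      \<and> tau (2*k) (2*k+2*kp) (x v) \<noteq> 0 \<and> tau (2*k) (4*k+2*kp) (x v) \<noteq> 0
      \<and> tau (2*k+2*kp) (4*k+2*kp) (x v) \<noteq> 0 \<and> tau (2*kp) (2*k+2*kp) (x v) \<noteq> 0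
      \<and> tau 0 (2*k) (x v) \<noteq> 0 \<and> tau 0 (2*k+2*kp) (x v) \<noteq> 0 \<and> tau 0 (2*kp) (x v) \<noteq> 0"
    unfolding x_def by (intro eventually_conj tau_eventually_ne_0) (simp_all add: ac_simps)
  then show ?thesis
  proof eventually_elim
    case (elim v)
    have "Y j (v + pr + pr1) * Y j (v + pr - pr1) * Y j (v - pr + pr1) * Y j (v - pr - pr1)
        = (Y j (v + (pr + pr1)) * Y j (v - (pr + pr1))) * (Y j (v + (pr - pr1)) * Y j (v - (pr - pr1)))"
      by (simp add: algebra_simps)
    also have "\<dots> = (inverse (1 + Y (j - 1) (v + pr1)) * inverse (1 + Y (j - 1) (v - pr1)))
        * ((1 + Y (j + 1) (v + pr)) * (1 + Y (j + 1) (v - pr)))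
        * ((1 + Y j (v + (pr - pr1))) * (1 + Y j (v - (pr - pr1))))"
      unfolding pairs pair_pred by (rule Yratio_Y_system_junction_nu_1) (use kp0 kpk n elim in auto)
    finally show ?case by (simp add: algebra_simps)
  qed
qed

lemma one_plus_Y_last_eq_square: "\<forall>\<^sub>\<approx>v. 1 + Y (M \<alpha> - 1) v = (1 + K v)\<^sup>2"
proof -
  obtain q where q: "\<alpha> = Suc q" using alpha by (cases \<alpha>) auto
  define a k b where "a = y (Suc \<alpha>)" and "k = y \<alpha>" and "b = nat (z (Suc \<alpha>))"
  define W where "W = z (\<alpha> - 1) + (int (\<nu> \<alpha>) - 1) * z \<alpha> - 1"
  define x where "x v = v + \<i> * of_int W * of_real p0" for v
  have ab: "p0 * real b = real_of_int a"
    unfolding a_def b_def using p0_mult_zz_last zz_nonneg[of \<nu> "Suc \<alpha>"] by simp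
  have k: "0 \<le> k" "k \<le> a" unfolding k_def a_def using yy_nonneg yy_Suc_le[of \<alpha>] by auto
  have Mq: "M \<alpha> = M q + int (\<nu> \<alpha>)" using q msum_Suc by simp
  have Y: "Y (M \<alpha> - 1) v = Yratio (x v + \<i> * of_int 0) a k" for v
    by (rule Yf_at_base[where q = q and W = W]) (use q Mq nu_last in \<open>auto simp: W_def x_def a_def k_def algebra_simps\<close>)
  have K: "K v = Kratio b a k (x v)" for v
    unfolding Kf_eq x_def W_def a_def k_def b_def ..
  have "\<forall>\<^sub>\<approx>v. tau (a - k) (a + k) (x v) \<noteq> 0"
    unfolding x_def by (rule tau_eventually_ne_0) (use alpha in \<open>auto simp: k_def\<close>)
  then show ?thesis
  proof eventually_elim
    case (elim v)
    show ?case unfolding Y K by (rule one_plus_Yratio_eq_square[OF ab k elim])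
  qed
qed

lemma K_product: "\<forall>\<^sub>\<approx>v. K (v + \<i> * of_real (pseq \<nu> p0 \<alpha>)) * K (v - \<i> * of_real (pseq \<nu> p0 \<alpha>)) = 1 + Y (M \<alpha> - 2) v"
proof -
  obtain q where q: "\<alpha> = Suc q" using alpha by (cases \<alpha>) auto
  define a k b where "a = y (Suc \<alpha>)" and "k = y \<alpha>" and "b = nat (z (Suc \<alpha>))"
  define W where "W = z (\<alpha> - 1) + (int (\<nu> \<alpha>) - 1) * z \<alpha> - 1 - z \<alpha>"
  define x where "x v = v + \<i> * of_int W * of_real p0" for v
  have ab: "p0 * real b = real_of_int a"
    unfolding a_def b_def using p0_mult_zz_last zz_nonneg[of \<nu> "Suc \<alpha>"] by simp
  have k: "0 \<le> k" "2 * k \<le> a" unfolding k_def a_def using yy_nonneg yy_last_gt_twice[of \<alpha>] alpha by auto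
  have Mq: "M \<alpha> = M q + int (\<nu> \<alpha>)" using q msum_Suc by simp
  have shift: "\<i> * of_real (pseq \<nu> p0 \<alpha>) = lattice_pt ((-1) ^ \<alpha> * z \<alpha>) ((-1) ^ \<alpha> * k)"
    unfolding pseq_lattice_pt k_def ..
  have par: "even (z (\<alpha> - 1) + (int (\<nu> \<alpha>) - 1) * z \<alpha> - 1 + z \<alpha> - W)"
    unfolding W_def by simp
  have K: "K (v + \<i> * of_real (pseq \<nu> p0 \<alpha>)) * K (v - \<i> * of_real (pseq \<nu> p0 \<alpha>))
      = Kratio b a k (x v + \<i> * of_int (-k)) * Kratio b a k (x v + \<i> * of_int k)" for v
    unfolding shift x_def a_def k_def b_def
    by (rule pair_at_lattice_pt[where h = "\<lambda>y. y" and f = K and W = W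
          and g = "Kratio (nat (z (Suc \<alpha>))) (y (Suc \<alpha>)) (y \<alpha>)", OF Kf_at_lattice_pt neg_one_power_int_cases par])
  have Y: "Y (M \<alpha> - 2) v = Yratio (x v + \<i> * of_int 0) (a - k) k" for v
    by (rule Yf_at_base[where q = q and W = W]) (use q Mq nu_last in \<open>auto simp: W_def x_def a_def k_def algebra_simps\<close>)
  have "\<forall>\<^sub>\<approx>v. tau a (a + 2 * k) (x v) \<noteq> 0 \<and> tau (a - 2 * k) a (x v) \<noteq> 0"
    unfolding x_def by (intro eventually_conj tau_eventually_ne_0) (use alpha in \<open>auto simp: k_def\<close>)
  then show ?thesis
  proof eventually_elim
    case (elim v)
    show ?case unfolding K Y by (rule Kratio_product[OF ab k]) (use elim in auto)
  qed
qed

lemma Y_system: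
  assumes r: "r \<in> {1..\<alpha>}" and j: "M (r - 1) \<le> j" "j \<le> M r - 2"
  shows "\<forall>\<^sub>\<approx>v. Y j (v + \<i> * of_real (pseq \<nu> p0 r)) * Y j (v - \<i> * of_real (pseq \<nu> p0 r))
    = onepY \<nu> \<alpha> p0 N m u \<omega> (j - 1) (if j = M (r - 1) then -1 else 1) v * (1 + Y (j + 1) v)"
proof -
  obtain q where q: "r = Suc q" "q < \<alpha>" using r by (cases r) auto
  have jq: "M q \<le> j" "j + 1 < M (Suc q)" using j q by auto
  have "0 \<le> M q" by (rule msum_nonneg)
  consider "j = 0" | "j \<noteq> 0" "j = M q" | "M q < j" using jq by linarith
  then show ?thesis
  proof cases
    case 1
    \<comment> \<open>both sides vanish, by the conventions \<open>Y\<^sub>0 = 0\<close> and \<open>(1 + Y\<^sub>-\<^sub>1)\<^sup>-\<^sup>1 = 0\<close>\<close>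
    then show ?thesis by (simp add: Yf_def onepY_def)
  next
    case 2
    then obtain p where p: "q = Suc p" by (cases q) (auto simp: msum_def)
    have "onepY \<nu> \<alpha> p0 N m u \<omega> (j - 1) (-1) v = inverse (1 + Y (j - 1) v)" for v
      using 2 \<open>0 \<le> M q\<close> by (simp add: onepY_def power_int_minus)
    then show ?thesis using Y_system_block_start[OF p q(2)] 2 q jq by simp
  next
    case 3
    then have "onepY \<nu> \<alpha> p0 N m u \<omega> (j - 1) (if j = M (r - 1) then -1 else 1) v = 1 + Y (j - 1) v" for v
      using q \<open>0 \<le> M q\<close> by (simp add: onepY_def)
    then show ?thesis using Y_system_interior[OF q(2) 3 jq(2)] q by simp
  qed
qed

lemma Y_system_at_block_end:
  assumes r: "1 \<le> r" "r < \<alpha>"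
    and pr: "pr = \<i> * of_real (pseq \<nu> p0 r)" and pr1: "pr1 = \<i> * of_real (pseq \<nu> p0 (Suc r))"
  shows "\<forall>\<^sub>\<approx>v. Y (M r - 1) (v + pr + pr1) * Y (M r - 1) (v + pr - pr1)
      * Y (M r - 1) (v - pr + pr1) * Y (M r - 1) (v - pr - pr1)
    = (onepY \<nu> \<alpha> p0 N m u \<omega> (M r - 1 - 1) (if \<nu> r = 1 then -1 else 1) (v + pr1)
       * onepY \<nu> \<alpha> p0 N m u \<omega> (M r - 1 - 1) (if \<nu> r = 1 then -1 else 1) (v - pr1))
      * (1 + Y (M r - 1 + 1) (v + pr)) * (1 + Y (M r - 1 + 1) (v - pr))
      * (1 + Y (M r - 1) (v + pr - pr1)) * (1 + Y (M r - 1) (v - pr + pr1))"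
proof -
  obtain q where q: "r = Suc q" using r by (cases r) auto
  have Mr: "M r = M q + int (\<nu> r)" "0 \<le> M q" using q msum_Suc msum_nonneg by simp_all
  have "\<nu> r \<ge> 1" using r nu_pos by auto
  then consider "\<nu> r \<ge> 2" | "\<nu> r = 1" "q = 0" | p where "\<nu> r = 1" "q = Suc p"
    by (cases q) fastforce+
  then show ?thesis
  proof cases
    case 1
    then have "onepY \<nu> \<alpha> p0 N m u \<omega> (M r - 1 - 1) (if \<nu> r = 1 then -1 else 1) w = 1 + Y (M r - 1 - 1) w" for w
      using Mr by (simp add: onepY_def)
    then show ?thesis using Y_system_junction[OF q r(2) 1 refl pr pr1] by simp
  next
    case 2
    then have "M r - 1 = 0" using Mr q by (simp add: msum_def)
    then show ?thesis by (simp add: Yf_def onepY_def)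
  next
    case 3
    have "1 \<le> M q" using msum_strict_mono[of 0 q] r q 3 by (simp add: msum_def)
    then have "onepY \<nu> \<alpha> p0 N m u \<omega> (M r - 1 - 1) (if \<nu> r = 1 then -1 else 1) w = inverse (1 + Y (M r - 1 - 1) w)" for w
      using Mr 3 by (simp add: onepY_def power_int_minus)
    then show ?thesis using Y_system_junction_nu_1[OF q 3(2) r(2) 3(1) refl pr pr1] by simp
  qed
qed

end

theorem theorem1:
  fixes \<nu> :: "nat \<Rightarrow> nat" and \<alpha> :: nat and p0 :: real
    and N m :: nat and u :: complex and \<omega> :: "nat \<Rightarrow> complex"
  assumes p0_rat: "p0 \<in> \<rat>" and p0_gt: "p0 > 2"
    and alpha: "\<alpha> \<ge> 1"
    and nu_pos: "\<forall>j\<in>{1..\<alpha>}. \<nu> j \<ge> 1"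
    and nu_last: "\<nu> \<alpha> \<ge> 2"
    and cf: "p0 = cfval \<nu> \<alpha>"
    and N: "even N" "N > 0"
    and m: "m \<le> N div 2"
    and bethe: "\<forall>j\<in>{1..m}.
        sinh (complex_of_real (pi / p0 / 2) * (\<omega> j - \<i> * (u + 2))) \<noteq> 0
      \<and> sinh (complex_of_real (pi / p0 / 2) * (\<omega> j + \<i> * u)) \<noteq> 0
      \<and> Qf (pi / p0) m \<omega> (\<omega> j - 2 * \<i>) \<noteq> 0
      \<and> - (((sinh (complex_of_real (pi / p0 / 2) * (\<omega> j + \<i> * (u + 2)))
             * sinh (complex_of_real (pi / p0 / 2) * (\<omega> j - \<i> * u)))
          / (sinh (complex_of_real (pi / p0 / 2) * (\<omega> j - \<i> * (u + 2)))
             * sinh (complex_of_real (pi / p0 / 2) * (\<omega> j + \<i> * u)))) ^ (N div 2))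
        = Qf (pi / p0) m \<omega> (\<omega> j + 2 * \<i>) / Qf (pi / p0) m \<omega> (\<omega> j - 2 * \<i>)"
  shows
   "(\<forall>r\<in>{1..\<alpha>}. \<forall>j::int. msum \<nu> (r - 1) \<le> j \<and> j \<le> msum \<nu> r - 2 \<longrightarrow>
       (\<forall>\<^sub>\<approx>v.
          Yf \<nu> \<alpha> p0 N m u \<omega> j (v + \<i> * of_real (pseq \<nu> p0 r))
        * Yf \<nu> \<alpha> p0 N m u \<omega> j (v - \<i> * of_real (pseq \<nu> p0 r))
        = onepY \<nu> \<alpha> p0 N m u \<omega> (j - 1) (if j = msum \<nu> (r - 1) then -1 else 1) v
        * (1 + Yf \<nu> \<alpha> p0 N m u \<omega> (j + 1) v)))
  \<and> (\<forall>r\<in>{1..\<alpha> - 1}. let j = msum \<nu> r - 1; pr = \<i> * of_real (pseq \<nu> p0 r);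
          pr1 = \<i> * of_real (pseq \<nu> p0 (Suc r)); e = (if \<nu> r = 1 then -1 else 1 :: int);
          Y = Yf \<nu> \<alpha> p0 N m u \<omega> in
       (\<forall>\<^sub>\<approx>v.
          Y j (v + pr + pr1) * Y j (v + pr - pr1) * Y j (v - pr + pr1) * Y j (v - pr - pr1)
        = (onepY \<nu> \<alpha> p0 N m u \<omega> (j - 1) e (v + pr1)
           * onepY \<nu> \<alpha> p0 N m u \<omega> (j - 1) e (v - pr1))
        * (1 + Y (j + 1) (v + pr)) * (1 + Y (j + 1) (v - pr))
        * (1 + Y j (v + pr - pr1)) * (1 + Y j (v - pr + pr1))))
  \<and> (\<forall>\<^sub>\<approx>v. 1 + Yf \<nu> \<alpha> p0 N m u \<omega> (msum \<nu> \<alpha> - 1) v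
            = (1 + Kf \<nu> \<alpha> p0 N m u \<omega> v) ^ 2)
  \<and> (\<forall>\<^sub>\<approx>v. Kf \<nu> \<alpha> p0 N m u \<omega> (v + \<i> * of_real (pseq \<nu> p0 \<alpha>))
            * Kf \<nu> \<alpha> p0 N m u \<omega> (v - \<i> * of_real (pseq \<nu> p0 \<alpha>))
            = 1 + Yf \<nu> \<alpha> p0 N m u \<omega> (msum \<nu> \<alpha> - 2) v)"
proof -
  have "sin (pi / p0) \<noteq> 0"
    using p0_gt sin_gt_zero[of "pi / p0"] by (simp add: field_simps)
  then interpret y_system p0 N m u \<omega> \<nu> \<alpha>
    by unfold_locales (use p0_gt N bethe alpha nu_pos nu_last cf in auto)
  show ?thesis unfolding Let_def
    by (intro conjI ballI allI impI Y_system Y_system_at_block_end one_plus_Y_last_eq_square K_product) auto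
qed

end
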